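(* Consider the following data. For $i=1,\dots,n_z$ and $j=1,\dots,n_u$ let $A_{c,ij}\in\mathbb{R}^{n_{ij}\times n_{ij}}$ and delays $\tau_{ij}\ge0$ be given, let $T_s>0$, and write $\tau_{ij}/T_s=m_{ij}-v_{ij}$ with $m_{ij}\in\mathbb{Z}_{\ge0}$ and $0\le v_{ij}<1$. Let $A_c=\mathrm{diag}(A_{c,11},A_{c,21},\dots,A_{c,n_zn_u})\in\mathbb{R}^{n_x\times n_x}$ and $V=\mathrm{diag}(v_{11}I_{n_{11}},v_{21}I_{n_{21}},\dots,v_{n_zn_u}I_{n_{n_zn_u}})$. Let $\bar m=\max_{ij}m_{ij}$, $n_{\tilde u}=(\bar m+1)n_u$, and let $B_{1c},B_{2c}\in\mathbb{R}^{n_x\times n_{\tilde u}}$, $C_c\in\mathbb{R}^{n_z\times n_x}$, $D_o\in\mathbb{R}^{n_z\times n_{\tilde u}}$ be the matrices of the delayed system (constructed as in the context). Let $Q_c\in\mathbb{R}^{n_z\times n_z}$ be symmetric positive semidefinite and $\mu>0$. Put $n_{xu}=n_x+n_{\tilde u}$, $I_{xu}$ the $n_{xu}\times n_{xu}$ identity, $I_h=\mathrm{diag}(I_{xu},I_{xu},I_{xu})$, $\bar B_{2c}=V(B_{2c}-B_{1c})$, $$H_{1c}=\begin{bmatrix}A_c&B_{1c}\\0&0\end{bmatrix},\ H_{2c}=\begin{bmatrix}VA_c&\bar B_{2c}\\0&0\end{bmatrix},\ H_{3c}=\begin{bmatrix}VA_c&0\\0&0\end{bmatrix},\ H_c=\mathrm{diag}(H_{1c},H_{2c},H_{3c}),$$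 $H_{cq}=H_c-\tfrac{\mu}{2}I_h$, $H_{cm}=H_c-\mu I_h$, $E_1=[I_{xu},\,I_{xu},\,-I_{xu}]$, $E_2=[I_{xu};I_{xu};I_{xu}]$, $\bar M_c=-\begin{bmatrix}C_c&D_o\end{bmatrix}'Q_c$, $\bar Q_c=-\bar M_c\begin{bmatrix}C_c&D_o\end{bmatrix}$. Let $A(t),A_v(t),B_1(t),B_2(t),H_q(t),H_m(t),Q(t),M(t)$, $t\in[0,T_s]$, solve $$\dot A=A_cA,\ A(0)=I;\quad \dot A_v=VA_cA_v,\ A_v(0)=I;\quad \dot B_1=A(t)B_{1c},\ B_1(0)=0;\quad \dot B_2=A_v(t)\bar B_{2c},\ B_2(0)=0;$$ $$\dot H_q=H_{cq}H_q,\ H_q(0)=I_h;\quad \dot H_m=H_{cm}H_m,\ H_m(0)=I_h;$$ $$\dot Q=\Gamma_q(t)'\bar Q_c\Gamma_q(t),\ Q(0)=0;\quad \dot M=\Gamma_m(t)'\bar M_c,\ M(0)=0,$$ where $\Gamma_q(t)=E_1H_q(t)E_2$ and $\Gamma_m(t)=E_1H_m(t)E_2$. Then $A=A(T_s)$, $B_o=B_1(T_s)+B_2(T_s)$, $Q=Q(T_s)$, $M=M(T_s)$ are the discrete-time matrices of the discounted LQ optimal control problem with time delays, namely $$A=e^{A_cT_s},\qquad B_o=\int_0^{T_s}e^{A_ct}B_{1c}\,dt+V\int_0^{T_s}e^{VA_ct}(B_{2c}-B_{1c})\,dt,$$ $$Q=\int_0^{T_s}e^{-\mu s}\Gamma(s)'\bar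 Q_c\Gamma(s)\,ds,\qquad M=\int_0^{T_s}e^{-\mu s}\Gamma(s)'\bar M_c\,ds,$$ where $\Gamma(s)=\begin{bmatrix}e^{A_cs}&B_o(s)\\0&I\end{bmatrix}$ with $B_o(s)=\int_0^{s}e^{A_cr}B_{1c}\,dr+V\int_0^{s}e^{VA_cr}(B_{2c}-B_{1c})\,dr$.
   Context: Time-delay MIMO system: for $i=1,\dots,n_z$, $j=1,\dots,n_u$, the SISO subsystem from input $j$ to output $i$ is $\dot x_{ij}(t)=A_{c,ij}x_{ij}(t)+B_{c,ij}u_j(t-\tau_{ij})$, $z_{ij}(t)=C_{c,ij}x_{ij}(t)+D_{c,ij}u_j(t-\tau_{ij})$, with $B_{c,ij}\in\mathbb{R}^{n_{ij}\times1}$, $C_{c,ij}\in\mathbb{R}^{1\times n_{ij}}$, $D_{c,ij}\in\mathbb{R}$; the full state is $x=[x_{11};x_{21};\dots;x_{n_zn_u}]\in\mathbb{R}^{n_x}$, input $u=[u_1;\dots;u_{n_u}]$, output $z=[z_1;\dots;z_{n_z}]$ with $z_i=\sum_j z_{ij}$. Inputs are piecewise constant, $u(t)=u_k$ on $[t_k,t_{k+1})$, $t_k=t_0+kT_s$, and the augmented input is $\tilde u_k=[u_{k-\bar m};\dots;u_{k-1};u_k]\in\mathbb{R}^{(\bar m+1)n_u}$. Let $e_j\in\mathbb{R}^{1\times n_u}$ be the $j$-th unit row vector and $E^p_{\bar m+1}\in\mathbb{R}^{n_u\times(\bar m+1)n_u}$ the block row whose $p$-th block is $I_{n_u}$ and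 others zero ($p=1,\dots,\bar m+1$). Then $B_{1c}=[B_{1c,11};B_{1c,21};\dots;B_{1c,n_zn_u}]$ with $B_{1c,ij}=B_{c,ij}e_jE^{m_{ij}}_{\bar m+1}$, $B_{2c}=[B_{2c,11};\dots;B_{2c,n_zn_u}]$ with $B_{2c,ij}=B_{c,ij}e_jE^{m_{ij}+1}_{\bar m+1}$; $C_c=[\bar C_1,\dots,\bar C_{n_u}]$ with $\bar C_j=\mathrm{diag}(C_{c,1j},\dots,C_{c,n_zj})$; $D_o=[\bar D_1;\dots;\bar D_{n_z}]$ with $\bar D_i=\sum_{j}D_{c,ij}e_jE^{m_{ij}}_{\bar m+1}$. In the discrete-time equivalent, the augmented state $\tilde x_k=[x_k;\,u_{k-\bar m};\dots;u_{k-1}]$ evolves with blocks of $A$ and $B_o$, and the stage costs have the form $\tfrac12[\tilde x_k;u_k]'e^{-\mu t_k}Q[\tilde x_k;u_k]+(e^{-\mu t_k}M\bar z_k)'[\tilde x_k;u_k]+\rho_k$ for the discounted cost $\int \tfrac12 e^{-\mu t}(z-\bar z)'Q_c(z-\bar z)\,dt$. A prime denotes transpose. *)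

theory Defs
  imports "HOL-Analysis.Analysis" "Jordan_Normal_Form.Matrix"
begin

fun vstack :: "nat \<Rightarrow> real mat list \<Rightarrow> real mat" where
  "vstack c [] = 0\<^sub>m 0 c"
| "vstack c (A # As) = (let B = vstack c As in
     four_block_mat A (0\<^sub>m (dim_row A) 0) B (0\<^sub>m (dim_row B) 0))"

fun hstack :: "nat \<Rightarrow> real mat list \<Rightarrow> real mat" where
  "hstack r [] = 0\<^sub>m r 0"
| "hstack r (A # As) = (let B = hstack r As in
     four_block_mat A B (0\<^sub>m 0 (dim_col A)) (0\<^sub>m 0 (dim_col B)))"

definition mexp :: "real mat \<Rightarrow> real mat" where
  "mexp A = mat (dim_row A) (dim_col A)
      (\<lambda>(r,c). \<Sum>k. (A ^\<^sub>m k) $$ (r,c) / fact k)"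

definition mat_integral :: "nat \<Rightarrow> nat \<Rightarrow> real \<Rightarrow> real \<Rightarrow> (real \<Rightarrow> real mat) \<Rightarrow> real mat" where
  "mat_integral n m a b F = mat n m (\<lambda>(r,c). integral {a..b} (\<lambda>t. F t $$ (r,c)))"

definition mat_has_deriv_on :: "nat \<Rightarrow> nat \<Rightarrow> (real \<Rightarrow> real mat) \<Rightarrow> (real \<Rightarrow> real mat) \<Rightarrow> real set \<Rightarrow> bool" where
  "mat_has_deriv_on n m F F' S \<longleftrightarrow>
     (\<forall>t\<in>S. F t \<in> carrier_mat n m \<and> F' t \<in> carrier_mat n m \<and>
        (\<forall>r<n. \<forall>c<m. ((\<lambda>s. F s $$ (r,c)) has_real_derivative (F' t $$ (r,c))) (at t within S)))"

definition sym_psd :: "nat \<Rightarrow> real mat \<Rightarrow> bool" where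
  "sym_psd n Q \<longleftrightarrow> Q \<in> carrier_mat n n \<and> transpose_mat Q = Q \<and>
     (\<forall>x \<in> carrier_vec n. 0 \<le> x \<bullet> (Q *\<^sub>v x))"

section \<open>The time-delay system data (indices 0-based: i < nz, j < nu)\<close>

text \<open>Ordering of the subsystems in the state x = [x11; x21; ...; x_{nz nu}]: i runs fastest.\<close>
definition sub_idx :: "nat \<Rightarrow> nat \<Rightarrow> (nat \<times> nat) list" where
  "sub_idx nz nu = concat (map (\<lambda>j. map (\<lambda>i. (i,j)) [0..<nz]) [0..<nu])"

text \<open>tau/Ts = m - v with m a nonnegative integer and 0 \<le> v < 1.\<close>
definition delay_m :: "real \<Rightarrow> real \<Rightarrow> nat" where
  "delay_m Ts tau = nat \<lceil>tau / Ts\<rceil>"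

definition delay_v :: "real \<Rightarrow> real \<Rightarrow> real" where
  "delay_v Ts tau = real (delay_m Ts tau) - tau / Ts"

definition mbar :: "nat \<Rightarrow> nat \<Rightarrow> real \<Rightarrow> (nat \<Rightarrow> nat \<Rightarrow> real) \<Rightarrow> nat" where
  "mbar nz nu Ts tau = Max {delay_m Ts (tau i j) | i j. i < nz \<and> j < nu}"

definition Ac_mat :: "nat \<Rightarrow> nat \<Rightarrow> (nat \<Rightarrow> nat \<Rightarrow> real mat) \<Rightarrow> real mat" where
  "Ac_mat nz nu Acij = diag_block_mat (map (\<lambda>(i,j). Acij i j) (sub_idx nz nu))"

definition V_mat :: "nat \<Rightarrow> nat \<Rightarrow> (nat \<Rightarrow> nat \<Rightarrow> nat) \<Rightarrow> real \<Rightarrow> (nat \<Rightarrow> nat \<Rightarrow> real) \<Rightarrow> real mat" where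
  "V_mat nz nu nij Ts tau = diag_block_mat
     (map (\<lambda>(i,j). delay_v Ts (tau i j) \<cdot>\<^sub>m 1\<^sub>m (nij i j)) (sub_idx nz nu))"

definition unit_row :: "nat \<Rightarrow> nat \<Rightarrow> real mat" where
  "unit_row nu j = mat 1 nu (\<lambda>(_,c). if c = j then 1 else 0)"

text \<open>E^p_{mb+1}: the nu x (mb+1)nu block row whose p-th block (p = 1..mb+1) is I_nu
  and whose other blocks are zero.  (For p = 0 or p > mb+1 there is no p-th block; the
  matrix is then zero.)\<close>
definition Esel :: "nat \<Rightarrow> nat \<Rightarrow> nat \<Rightarrow> real mat" where
  "Esel nu mb p = mat nu ((mb + 1) * nu) (\<lambda>(r,c). if 1 \<le> p \<and> c = (p - 1) * nu + r then 1 else 0)"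

definition B1c_mat :: "nat \<Rightarrow> nat \<Rightarrow> real \<Rightarrow> (nat \<Rightarrow> nat \<Rightarrow> real) \<Rightarrow> (nat \<Rightarrow> nat \<Rightarrow> real mat) \<Rightarrow> real mat" where
  "B1c_mat nz nu Ts tau Bcij = (let mb = mbar nz nu Ts tau in
     vstack ((mb + 1) * nu) (map (\<lambda>(i,j). Bcij i j * unit_row nu j * Esel nu mb (delay_m Ts (tau i j)))
        (sub_idx nz nu)))"

definition B2c_mat :: "nat \<Rightarrow> nat \<Rightarrow> real \<Rightarrow> (nat \<Rightarrow> nat \<Rightarrow> real) \<Rightarrow> (nat \<Rightarrow> nat \<Rightarrow> real mat) \<Rightarrow> real mat" where
  "B2c_mat nz nu Ts tau Bcij = (let mb = mbar nz nu Ts tau in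
     vstack ((mb + 1) * nu) (map (\<lambda>(i,j). Bcij i j * unit_row nu j * Esel nu mb (delay_m Ts (tau i j) + 1))
        (sub_idx nz nu)))"

definition Cc_mat :: "nat \<Rightarrow> nat \<Rightarrow> (nat \<Rightarrow> nat \<Rightarrow> real mat) \<Rightarrow> real mat" where
  "Cc_mat nz nu Ccij = hstack nz (map (\<lambda>j. diag_block_mat (map (\<lambda>i. Ccij i j) [0..<nz])) [0..<nu])"

definition Do_mat :: "nat \<Rightarrow> nat \<Rightarrow> real \<Rightarrow> (nat \<Rightarrow> nat \<Rightarrow> real) \<Rightarrow> (nat \<Rightarrow> nat \<Rightarrow> real) \<Rightarrow> real mat" where
  "Do_mat nz nu Ts tau Dcij = (let mb = mbar nz nu Ts tau in
     vstack ((mb + 1) * nu) (map (\<lambda>i.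
        foldr (+) (map (\<lambda>j. Dcij i j \<cdot>\<^sub>m (unit_row nu j * Esel nu mb (delay_m Ts (tau i j)))) [0..<nu])
          (0\<^sub>m 1 ((mb + 1) * nu))) [0..<nz]))"

end

theory Submission
  imports Defs
begin

(* All equations in the statement are linear with constant coefficients, and X' = K X has at most
   one solution with a given initial value: the sum g of the squared entries of the difference of
   two solutions satisfies g' <= C g and g(0) = 0, hence vanishes. The matrix exponential, defined
   by its entrywise power series, solves X' = K X, so A(t) = exp(t Ac) and Av(t) = exp(t V Ac).
   Integrating the equations for B1 and B2 gives Bo; V can be pulled out of the second integral
   because the block-scalar V commutes with Ac.
   For the cost matrices, [[A, B], [0, I]] with A' = K A and B' = A Bc solves
   X' = [[K, Bc], [0, 0]] X. Hence Hq(t) and Hm(t) are exp(-mu t/2) resp. exp(-mu t) times the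
   block diagonal of three such matrices, built from (A, B1), (Av, B2) and (Av, 0). Sandwiching
   between E1 and E2 adds the first two blocks and subtracts the third, which leaves the discount
   factor times Gamma(t); the formulas for Q and M follow by the fundamental theorem of calculus. *)

section \<open>Block matrices\<close>

lemma index_mult_mat_sum:
  assumes "A \<in> carrier_mat n k" and "B \<in> carrier_mat k m" and "i < n" and "j < m"
  shows "(A * B) $$ (i,j) = (\<Sum>l<k. A $$ (i,l) * B $$ (l,j))"
  using assms by (auto simp: scalar_prod_def atLeast0LessThan)

lemma transpose_smult_mat: "transpose_mat (c \<cdot>\<^sub>m G) = c \<cdot>\<^sub>m transpose_mat (G :: real mat)"
  by (intro eq_matI) auto

lemma smult_smult_mat: "c \<cdot>\<^sub>m (d \<cdot>\<^sub>m G) = (c * d) \<cdot>\<^sub>m (G :: real mat)"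
  by (intro eq_matI) auto

lemma transpose_smult_mult_smult:
  fixes G Q :: "real mat"
  assumes G: "G \<in> carrier_mat n m" and Q: "Q \<in> carrier_mat n n"
  shows "transpose_mat (c \<cdot>\<^sub>m G) * Q * (c \<cdot>\<^sub>m G) = (c * c) \<cdot>\<^sub>m (transpose_mat G * Q * G)"
proof -
  have GT: "transpose_mat G \<in> carrier_mat m n" using G by simp
  have "transpose_mat (c \<cdot>\<^sub>m G) * Q * (c \<cdot>\<^sub>m G) = c \<cdot>\<^sub>m (transpose_mat G * Q) * (c \<cdot>\<^sub>m G)"
    unfolding transpose_smult_mat by (simp add: mult_smult_assoc_mat[OF GT Q])
  also have "\<dots> = c \<cdot>\<^sub>m (c \<cdot>\<^sub>m (transpose_mat G * Q * G))"
    using GT Q G by (simp add: mult_smult_assoc_mat[of _ m n _ m] mult_smult_distrib[of _ m n _ m])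
  finally show ?thesis by (simp add: smult_smult_mat)
qed

lemma transpose_smult_mult:
  fixes G M :: "real mat"
  assumes "G \<in> carrier_mat n m" and "M \<in> carrier_mat n k"
  shows "transpose_mat (c \<cdot>\<^sub>m G) * M = c \<cdot>\<^sub>m (transpose_mat G * M)"
  using assms by (simp add: transpose_smult_mat mult_smult_assoc_mat[of _ m n _ k])

lemma mult_block_diag:
  fixes A1 A2 D1 D2 :: "real mat"
  assumes "A1 \<in> carrier_mat n1 n1" "A2 \<in> carrier_mat n1 n1" "D1 \<in> carrier_mat n2 n2" "D2 \<in> carrier_mat n2 n2"
  shows "four_block_mat A1 (0\<^sub>m n1 n2) (0\<^sub>m n2 n1) D1 * four_block_mat A2 (0\<^sub>m n1 n2) (0\<^sub>m n2 n1) D2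
     = four_block_mat (A1 * A2) (0\<^sub>m n1 n2) (0\<^sub>m n2 n1) (D1 * D2)"
  using assms by (subst mult_four_block_mat[OF assms(1) zero_carrier_mat zero_carrier_mat assms(3)
      assms(2) zero_carrier_mat zero_carrier_mat assms(4)]) auto

lemma mult_augmented_block:
  fixes K Bc Y Z :: "real mat"
  assumes "K \<in> carrier_mat n n" and "Bc \<in> carrier_mat n p"
    and "Y \<in> carrier_mat n n" and "Z \<in> carrier_mat n p"
  shows "four_block_mat K Bc (0\<^sub>m p n) (0\<^sub>m p p) * four_block_mat Y Z (0\<^sub>m p n) (1\<^sub>m p)
     = four_block_mat (K * Y) (K * Z + Bc) (0\<^sub>m p n) (0\<^sub>m p p)"
  using assms by (subst mult_four_block_mat[OF assms(1,2) zero_carrier_mat zero_carrier_mat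
      assms(3,4) zero_carrier_mat one_carrier_mat]) auto

lemma diag_block_mat_three:
  assumes "X \<in> carrier_mat N N" "Y \<in> carrier_mat N N" "Z \<in> carrier_mat N N"
  shows "diag_block_mat [X, Y, Z]
    = four_block_mat X (0\<^sub>m N (N + N)) (0\<^sub>m (N + N) N) (four_block_mat Y (0\<^sub>m N N) (0\<^sub>m N N) Z)"
proof -
  have "four_block_mat Z (0\<^sub>m N 0) (0\<^sub>m 0 N) (0\<^sub>m 0 0) = Z"
    using assms(3) by (intro eq_matI) auto
  then show ?thesis using assms by (simp add: Let_def)
qed

lemma diag_block_mat_three_one: "diag_block_mat [1\<^sub>m N, 1\<^sub>m N, 1\<^sub>m N] = (1\<^sub>m (3 * N) :: real mat)"
proof -
  have "diag_block_mat [1\<^sub>m N, 1\<^sub>m N, 1\<^sub>m N] = (1\<^sub>m (N + (N + N)) :: real mat)"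
    by (subst diag_block_mat_three) auto
  also have "N + (N + N) = 3 * N" by simp
  finally show ?thesis .
qed

lemma mult_smult_mult_mat:
  fixes A G B :: "real mat"
  assumes "A \<in> carrier_mat n k" and "G \<in> carrier_mat k l" and "B \<in> carrier_mat l m"
  shows "A * (c \<cdot>\<^sub>m G) * B = c \<cdot>\<^sub>m (A * G * B)"
  using assms by (simp add: mult_smult_distrib mult_smult_assoc_mat[of _ n l _ m])

lemma vstack_carrier:
  "(\<And>x. x \<in> set xs \<Longrightarrow> f x \<in> carrier_mat (d x) c) \<Longrightarrow>
   vstack c (map f xs) \<in> carrier_mat (sum_list (map d xs)) c"
proof (induction xs)
  case (Cons a xs)
  then have "f a \<in> carrier_mat (d a) c" and "vstack c (map f xs) \<in> carrier_mat (sum_list (map d xs)) c"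
    by auto
  then show ?case by (auto simp: Let_def)
qed simp

lemma hstack_carrier:
  "(\<And>x. x \<in> set xs \<Longrightarrow> f x \<in> carrier_mat r (d x)) \<Longrightarrow>
   hstack r (map f xs) \<in> carrier_mat r (sum_list (map d xs))"
proof (induction xs)
  case (Cons a xs)
  then have "f a \<in> carrier_mat r (d a)" and "hstack r (map f xs) \<in> carrier_mat r (sum_list (map d xs))"
    by auto
  then show ?case by (auto simp: Let_def)
qed simp

lemma hstack_two_carrier:
  "A \<in> carrier_mat r a \<Longrightarrow> B \<in> carrier_mat r b \<Longrightarrow> hstack r [A, B] \<in> carrier_mat r (a + b)"
  using hstack_carrier[of "[A, B]" id r dim_col] by auto

lemma diag_block_mat_carrier:
  assumes "\<And>x. x \<in> set xs \<Longrightarrow> f x \<in> carrier_mat (d x) (e x)"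
  shows "diag_block_mat (map f xs) \<in> carrier_mat (sum_list (map d xs)) (sum_list (map e xs))"
proof -
  have "map dim_row (map f xs) = map d xs" and "map dim_col (map f xs) = map e xs"
    using assms by auto
  then show ?thesis by (intro carrier_matI) (simp_all only: dim_diag_block_mat)
qed

lemma mult_diag_block_mat:
  fixes f g :: "'b \<Rightarrow> real mat"
  assumes "\<And>x. x \<in> set xs \<Longrightarrow> f x \<in> carrier_mat (d x) (d x) \<and> g x \<in> carrier_mat (d x) (d x)"
  shows "diag_block_mat (map f xs) * diag_block_mat (map g xs) = diag_block_mat (map (\<lambda>x. f x * g x) xs)"
  using assms
proof (induction xs)
  case (Cons x xs)
  let ?F = "diag_block_mat (map f xs)" and ?G = "diag_block_mat (map g xs)"
  let ?n = "sum_list (map d xs)"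
  have F: "?F \<in> carrier_mat ?n ?n" and G: "?G \<in> carrier_mat ?n ?n"
    using Cons.prems by (auto intro!: diag_block_mat_carrier)
  have fx: "f x \<in> carrier_mat (d x) (d x)" and gx: "g x \<in> carrier_mat (d x) (d x)"
    using Cons.prems by auto
  have FG: "diag_block_mat (map (\<lambda>x. f x * g x) xs) \<in> carrier_mat ?n ?n"
    using Cons.prems by (intro diag_block_mat_carrier) (meson list.set_intros(2) mult_carrier_mat)
  have "diag_block_mat (map f (x # xs)) * diag_block_mat (map g (x # xs))
      = four_block_mat (f x * g x) (0\<^sub>m (d x) ?n) (0\<^sub>m ?n (d x)) (?F * ?G)"
    using fx gx F G by (simp add: Let_def mult_block_diag)
  also have "\<dots> = diag_block_mat (map (\<lambda>x. f x * g x) (x # xs))"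
    using Cons FG by (simp add: Let_def carrier_matD[OF fx] carrier_matD[OF gx])
  finally show ?case .
qed simp

lemma hstack_identities_mult_index:
  fixes Y :: "real mat"
  assumes Y: "Y \<in> carrier_mat (3 * N) m" and r: "r < N" and l: "l < m"
  shows "(hstack N [1\<^sub>m N, 1\<^sub>m N, - 1\<^sub>m N] * Y) $$ (r,l) = Y $$ (r,l) + Y $$ (r + N, l) - Y $$ (r + 2 * N, l)"
proof -
  have E: "hstack N [1\<^sub>m N, 1\<^sub>m N, - 1\<^sub>m N] = mat N (3 * N)
      (\<lambda>(i,k). (if k = i then 1 else 0) + (if k = i + N then 1 else 0) - (if k = i + 2 * N then 1 else 0))"
    by (rule eq_matI) (auto simp: Let_def)
  have "(hstack N [1\<^sub>m N, 1\<^sub>m N, - 1\<^sub>m N] * Y) $$ (r,l) = (\<Sum>k<3 * N.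
      ((if k = r then 1 else 0) + (if k = r + N then 1 else 0) - (if k = r + 2 * N then 1 else 0)) * Y $$ (k,l))"
    unfolding E by (subst index_mult_mat_sum[OF mat_carrier Y r l]) (use r in \<open>auto intro!: sum.cong\<close>)
  also have "\<dots> = Y $$ (r,l) + Y $$ (r + N, l) - Y $$ (r + 2 * N, l)"
    using r by (simp add: ring_distribs sum.distrib sum_subtractf if_distrib[of "\<lambda>x. x * _"] cong: if_cong)
  finally show ?thesis .
qed

lemma mult_vstack_identities_index:
  fixes Z :: "real mat"
  assumes Z: "Z \<in> carrier_mat k (3 * N)" and r: "r < k" and c: "c < N"
  shows "(Z * vstack N [1\<^sub>m N, 1\<^sub>m N, 1\<^sub>m N]) $$ (r,c) = Z $$ (r,c) + Z $$ (r, c + N) + Z $$ (r, c + 2 * N)"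
proof -
  have E: "vstack N [1\<^sub>m N, 1\<^sub>m N, 1\<^sub>m N] = mat (3 * N) N
      (\<lambda>(l,j). (if l = j then 1 else 0) + (if l = j + N then 1 else 0) + (if l = j + 2 * N then 1 else 0))"
    by (rule eq_matI) (auto simp: Let_def)
  have "(Z * vstack N [1\<^sub>m N, 1\<^sub>m N, 1\<^sub>m N]) $$ (r,c) = (\<Sum>l<3 * N.
      Z $$ (r,l) * ((if l = c then 1 else 0) + (if l = c + N then 1 else 0) + (if l = c + 2 * N then 1 else 0)))"
    unfolding E by (subst index_mult_mat_sum[OF Z mat_carrier r c]) (use c in \<open>auto intro!: sum.cong\<close>)
  also have "\<dots> = Z $$ (r,c) + Z $$ (r, c + N) + Z $$ (r, c + 2 * N)"
    using c by (simp add: ring_distribs sum.distrib if_distrib[of "\<lambda>x. _ * x"] cong: if_cong)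
  finally show ?thesis .
qed

lemma sandwich_diag_block_mat_three:
  fixes X Y Z :: "real mat"
  assumes X: "X \<in> carrier_mat N N" and Y: "Y \<in> carrier_mat N N" and Z: "Z \<in> carrier_mat N N"
  shows "hstack N [1\<^sub>m N, 1\<^sub>m N, - 1\<^sub>m N] * diag_block_mat [X, Y, Z] * vstack N [1\<^sub>m N, 1\<^sub>m N, 1\<^sub>m N]
    = X + Y - Z"
proof -
  let ?E1 = "hstack N [1\<^sub>m N, 1\<^sub>m N, - 1\<^sub>m N]" and ?D = "diag_block_mat [X, Y, Z]"
  have D: "?D \<in> carrier_mat (3 * N) (3 * N)" and E1: "?E1 \<in> carrier_mat N (3 * N)"
    using X Y Z by (auto simp: Let_def)
  have "(?E1 * ?D * vstack N [1\<^sub>m N, 1\<^sub>m N, 1\<^sub>m N]) $$ (r,c) = (X + Y - Z) $$ (r,c)"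
    if r: "r < N" and c: "c < N" for r c
  proof -
    have "c < 3 * N" "c + N < 3 * N" "c + 2 * N < 3 * N" using c by auto
    then have "(?E1 * ?D * vstack N [1\<^sub>m N, 1\<^sub>m N, 1\<^sub>m N]) $$ (r,c)
      = (?D $$ (r, c) + ?D $$ (r + N, c) - ?D $$ (r + 2 * N, c))
      + (?D $$ (r, c + N) + ?D $$ (r + N, c + N) - ?D $$ (r + 2 * N, c + N))
      + (?D $$ (r, c + 2 * N) + ?D $$ (r + N, c + 2 * N) - ?D $$ (r + 2 * N, c + 2 * N))"
      by (simp only: mult_vstack_identities_index[OF mult_carrier_mat[OF E1 D] r c]
          hstack_identities_mult_index[OF D r])
    also have "\<dots> = (X + Y - Z) $$ (r,c)"
      using r c X Y Z by (simp add: diag_block_mat_three[OF X Y Z])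
    finally show ?thesis .
  qed
  then show ?thesis
    using X Y Z E1 D by (intro eq_matI) (auto simp: Let_def)
qed

section \<open>Entrywise derivatives of matrix-valued functions\<close>

lemma mat_has_deriv_onI:
  assumes "\<And>t. t \<in> S \<Longrightarrow> F t \<in> carrier_mat n m" and "\<And>t. t \<in> S \<Longrightarrow> F' t \<in> carrier_mat n m"
    and "\<And>t r c. t \<in> S \<Longrightarrow> r < n \<Longrightarrow> c < m \<Longrightarrow>
           ((\<lambda>s. F s $$ (r,c)) has_real_derivative F' t $$ (r,c)) (at t within S)"
  shows "mat_has_deriv_on n m F F' S"
  using assms unfolding mat_has_deriv_on_def by auto

lemma mat_has_deriv_onD:
  "mat_has_deriv_on n m F F' S \<Longrightarrow> t \<in> S \<Longrightarrow> r < n \<Longrightarrow> c < m \<Longrightarrow>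
   ((\<lambda>s. F s $$ (r,c)) has_real_derivative F' t $$ (r,c)) (at t within S)"
  unfolding mat_has_deriv_on_def by auto

lemma mat_has_deriv_on_carrier:
  assumes "mat_has_deriv_on n m F F' S" and "t \<in> S"
  shows "F t \<in> carrier_mat n m" and "F' t \<in> carrier_mat n m"
  using assms unfolding mat_has_deriv_on_def by auto

lemma mat_has_deriv_on_dim:
  assumes "mat_has_deriv_on n m F F' S" and "t \<in> S"
  shows "dim_row (F t) = n" "dim_col (F t) = m" "dim_row (F' t) = n" "dim_col (F' t) = m"
  using mat_has_deriv_on_carrier[OF assms] by auto

lemma mat_has_deriv_on_entrywiseI:
  assumes "\<And>t. t \<in> S \<Longrightarrow> F t \<in> carrier_mat n m" and "\<And>t. t \<in> S \<Longrightarrow> F' t \<in> carrier_mat n m"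
    and "\<And>t r c. t \<in> S \<Longrightarrow> r < n \<Longrightarrow> c < m \<Longrightarrow> (f r c has_real_derivative F' t $$ (r,c)) (at t within S)"
    and "\<And>s r c. s \<in> S \<Longrightarrow> r < n \<Longrightarrow> c < m \<Longrightarrow> F s $$ (r,c) = f r c s"
  shows "mat_has_deriv_on n m F F' S"
proof (rule mat_has_deriv_onI[OF assms(1,2)])
  fix t r c assume "t \<in> S" "r < n" "c < m"
  then show "((\<lambda>s. F s $$ (r,c)) has_real_derivative F' t $$ (r,c)) (at t within S)"
    using has_field_derivative_transform_within[OF assms(3), of t r c 1 "\<lambda>s. F s $$ (r,c)"] assms(4)
    by auto
qed

lemma mat_has_deriv_on_subset:
  "mat_has_deriv_on n m F F' S \<Longrightarrow> T \<subseteq> S \<Longrightarrow> mat_has_deriv_on n m F F' T"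
  unfolding mat_has_deriv_on_def by (meson has_field_derivative_subset subsetD)

lemma mat_has_deriv_on_cong:
  "mat_has_deriv_on n m F F' S \<Longrightarrow> (\<And>t. t \<in> S \<Longrightarrow> F' t = G' t) \<Longrightarrow> mat_has_deriv_on n m F G' S"
  unfolding mat_has_deriv_on_def by auto

lemma mat_has_deriv_on_transform:
  assumes F: "mat_has_deriv_on n m F F' S"
    and "\<And>t. t \<in> S \<Longrightarrow> G t = F t" and "\<And>t. t \<in> S \<Longrightarrow> G' t = F' t"
  shows "mat_has_deriv_on n m G G' S"
  using assms(2,3) mat_has_deriv_on_carrier[OF F]
  by (intro mat_has_deriv_on_entrywiseI[where f = "\<lambda>r c s. F s $$ (r,c)"])
    (auto intro: mat_has_deriv_onD[OF F])

lemma mat_has_deriv_on_const: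
  "C \<in> carrier_mat n m \<Longrightarrow> mat_has_deriv_on n m (\<lambda>t. C) (\<lambda>t. 0\<^sub>m n m) S"
  by (intro mat_has_deriv_onI) auto

lemma mat_has_deriv_on_diff:
  assumes F: "mat_has_deriv_on n m F F' S" and G: "mat_has_deriv_on n m G G' S"
  shows "mat_has_deriv_on n m (\<lambda>t. F t - G t) (\<lambda>t. F' t - G' t) S"
  by (intro mat_has_deriv_on_entrywiseI[where f = "\<lambda>r c s. F s $$ (r,c) - G s $$ (r,c)"])
    (auto intro!: DERIV_diff mat_has_deriv_onD[OF F] mat_has_deriv_onD[OF G]
      simp: mat_has_deriv_on_dim[OF F] mat_has_deriv_on_dim[OF G])

lemma mat_has_deriv_on_mult_left:
  assumes C: "C \<in> carrier_mat k n" and F: "mat_has_deriv_on n m F F' S"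
  shows "mat_has_deriv_on k m (\<lambda>t. C * F t) (\<lambda>t. C * F' t) S"
  using C
  by (intro mat_has_deriv_on_entrywiseI[where f = "\<lambda>r c s. \<Sum>j<n. C $$ (r,j) * F s $$ (j,c)"])
    (auto intro!: DERIV_sum DERIV_cmult mat_has_deriv_onD[OF F]
      simp: mat_has_deriv_on_dim[OF F] scalar_prod_def atLeast0LessThan)

lemma mat_has_deriv_on_mult_right:
  assumes C: "C \<in> carrier_mat m k" and F: "mat_has_deriv_on n m F F' S"
  shows "mat_has_deriv_on n k (\<lambda>t. F t * C) (\<lambda>t. F' t * C) S"
  using C
  by (intro mat_has_deriv_on_entrywiseI[where f = "\<lambda>r c s. \<Sum>j<m. F s $$ (r,j) * C $$ (j,c)"])
    (auto intro!: DERIV_sum DERIV_cmult_right mat_has_deriv_onD[OF F]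
      simp: mat_has_deriv_on_dim[OF F] scalar_prod_def atLeast0LessThan)

lemma mat_has_deriv_on_scalar_mult:
  assumes f: "\<And>t. t \<in> S \<Longrightarrow> (f has_real_derivative f' t) (at t within S)"
    and F: "mat_has_deriv_on n m F F' S"
  shows "mat_has_deriv_on n m (\<lambda>t. f t \<cdot>\<^sub>m F t) (\<lambda>t. f' t \<cdot>\<^sub>m F t + f t \<cdot>\<^sub>m F' t) S"
  by (intro mat_has_deriv_on_entrywiseI[where f = "\<lambda>r c s. f s * F s $$ (r,c)"])
    (auto intro!: derivative_eq_intros f mat_has_deriv_onD[OF F] simp: mat_has_deriv_on_dim[OF F])

lemma mat_has_deriv_on_four_block:
  assumes A: "mat_has_deriv_on n1 m1 A A' S" and B: "mat_has_deriv_on n1 m2 B B' S"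
    and C: "mat_has_deriv_on n2 m1 C C' S" and D: "mat_has_deriv_on n2 m2 D D' S"
  shows "mat_has_deriv_on (n1 + n2) (m1 + m2) (\<lambda>t. four_block_mat (A t) (B t) (C t) (D t))
           (\<lambda>t. four_block_mat (A' t) (B' t) (C' t) (D' t)) S"
  by (intro mat_has_deriv_on_entrywiseI[where f = "\<lambda>r c s. if r < n1 then if c < m1 then A s $$ (r,c)
      else B s $$ (r, c - m1) else if c < m1 then C s $$ (r - n1, c) else D s $$ (r - n1, c - m1)"])
    (auto intro: mat_has_deriv_onD[OF A] mat_has_deriv_onD[OF B] mat_has_deriv_onD[OF C]
      mat_has_deriv_onD[OF D] simp: mat_has_deriv_on_dim[OF A] mat_has_deriv_on_dim[OF D])

lemma mat_has_deriv_on_continuous: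
  assumes "mat_has_deriv_on n m F F' S" and "r < n" and "c < m"
  shows "continuous_on S (\<lambda>t. F t $$ (r,c))"
  using mat_has_deriv_onD[OF assms(1) _ assms(2,3)]
  by (meson DERIV_continuous continuous_on_eq_continuous_within)

section \<open>Uniqueness for linear matrix differential equations\<close>

lemma gronwall_zero_initial:
  fixes g g' :: "real \<Rightarrow> real"
  assumes deriv: "\<And>s. s \<in> {0..T} \<Longrightarrow> (g has_real_derivative g' s) (at s within {0..T})"
    and bound: "\<And>s. s \<in> {0..T} \<Longrightarrow> g' s \<le> C * g s"
    and nonneg: "\<And>s. s \<in> {0..T} \<Longrightarrow> 0 \<le> g s"
    and g0: "g 0 = 0" and t: "t \<in> {0..T}"
  shows "g t = 0"
proof -
  define h where "h s = exp (- C * s) * g s" for s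
  have h_deriv: "(h has_real_derivative exp (- C * s) * (g' s - C * g s)) (at s within {0..T})"
    if "s \<in> {0..T}" for s
    unfolding h_def using that
    by (auto intro!: derivative_eq_intros deriv simp: algebra_simps)
  have "h t \<le> h 0"
  proof (rule DERIV_nonpos_imp_decreasing_open[of 0 t h])
    show "0 \<le> t" using t by simp
    have "continuous_on {0..T} h"
      using h_deriv by (meson DERIV_continuous continuous_on_eq_continuous_within)
    then show "continuous_on {0..t} h"
      by (rule continuous_on_subset) (use t in auto)
    fix s assume "0 < s" "s < t"
    then have "s \<in> {0..T}" and "at s within {0..T} = at s"
      using t by (auto intro!: at_within_Icc_at)
    then show "\<exists>y. (h has_real_derivative y) (at s) \<and> y \<le> 0"
      using h_deriv bound by (metis diff_le_0_iff_le exp_ge_zero mult_nonneg_nonpos)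
  qed
  then have "g t \<le> 0"
    unfolding h_def g0 by (simp add: mult_le_0_iff)
  with nonneg[OF t] show ?thesis by simp
qed

lemma frobenius_inner_mult_le:
  fixes K D :: "real mat"
  assumes K: "K \<in> carrier_mat n n" and D: "D \<in> carrier_mat n m"
  shows "(\<Sum>r<n. \<Sum>c<m. D $$ (r,c) * (K * D) $$ (r,c))
    \<le> m * (\<Sum>r<n. \<Sum>j<n. \<bar>K $$ (r,j)\<bar>) * (\<Sum>r<n. \<Sum>c<m. (D $$ (r,c))\<^sup>2)"
proof -
  define g where "g = (\<Sum>r<n. \<Sum>c<m. (D $$ (r,c))\<^sup>2)"
  have entry_le: "(D $$ (r,c))\<^sup>2 \<le> g" if "r < n" "c < m" for r c
  proof -
    have "(D $$ (r,c))\<^sup>2 \<le> (\<Sum>c<m. (D $$ (r,c))\<^sup>2)"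
      by (rule member_le_sum) (use that in auto)
    also have "\<dots> \<le> g"
      unfolding g_def by (rule member_le_sum[of r, where f = "\<lambda>r. \<Sum>c<m. (D $$ (r,c))\<^sup>2"])
        (use that in \<open>auto intro: sum_nonneg\<close>)
    finally show ?thesis .
  qed
  have term_le: "D $$ (r,c) * (K $$ (r,j) * D $$ (j,c)) \<le> \<bar>K $$ (r,j)\<bar> * g"
    if "r < n" "c < m" "j < n" for r c j
  proof -
    have "2 * (\<bar>D $$ (r,c)\<bar> * \<bar>D $$ (j,c)\<bar>) \<le> (D $$ (r,c))\<^sup>2 + (D $$ (j,c))\<^sup>2"
      using sum_squares_bound[of "\<bar>D $$ (r,c)\<bar>" "\<bar>D $$ (j,c)\<bar>"] by simp
    also have "\<dots> \<le> 2 * g" using entry_le[of r c] entry_le[of j c] that by simp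
    finally have "\<bar>D $$ (r,c)\<bar> * \<bar>D $$ (j,c)\<bar> \<le> g" by simp
    moreover have "D $$ (r,c) * (K $$ (r,j) * D $$ (j,c))
        \<le> \<bar>K $$ (r,j)\<bar> * (\<bar>D $$ (r,c)\<bar> * \<bar>D $$ (j,c)\<bar>)"
      by (metis abs_ge_self abs_mult mult.left_commute)
    ultimately show ?thesis by (meson abs_ge_zero mult_left_mono order_trans)
  qed
  have "(\<Sum>r<n. \<Sum>c<m. D $$ (r,c) * (K * D) $$ (r,c))
      = (\<Sum>r<n. \<Sum>c<m. \<Sum>j<n. D $$ (r,c) * (K $$ (r,j) * D $$ (j,c)))"
    using K D by (simp add: scalar_prod_def atLeast0LessThan sum_distrib_left)
  also have "\<dots> \<le> (\<Sum>r<n. \<Sum>c<m. \<Sum>j<n. \<bar>K $$ (r,j)\<bar> * g)"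
    by (intro sum_mono term_le) auto
  also have "\<dots> = m * (\<Sum>r<n. \<Sum>j<n. \<bar>K $$ (r,j)\<bar>) * g"
    by (simp add: sum_distrib_left sum_distrib_right mult_ac)
  finally show ?thesis unfolding g_def .
qed

lemma linear_mat_ode_zero:
  fixes K :: "real mat"
  assumes K: "K \<in> carrier_mat n n"
    and D: "mat_has_deriv_on n m D (\<lambda>t. K * D t) {0..T}" and D0: "D 0 = 0\<^sub>m n m"
    and t: "t \<in> {0..T}"
  shows "D t = 0\<^sub>m n m"
proof -
  define L where "L = (\<Sum>r<n. \<Sum>j<n. \<bar>K $$ (r,j)\<bar>)"
  define g where "g s = (\<Sum>r<n. \<Sum>c<m. (D s $$ (r,c))\<^sup>2)" for s
  have "g t = 0"
  proof (rule gronwall_zero_initial[OF _ _ _ _ t])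
    fix s assume s: "s \<in> {0..T}"
    show "(g has_real_derivative (\<Sum>r<n. \<Sum>c<m. 2 * (D s $$ (r,c) * (K * D s) $$ (r,c))))
        (at s within {0..T})"
      unfolding g_def using s
      by (auto intro!: derivative_eq_intros mat_has_deriv_onD[OF D] simp: power2_eq_square)
    show "(\<Sum>r<n. \<Sum>c<m. 2 * (D s $$ (r,c) * (K * D s) $$ (r,c))) \<le> 2 * (m * L) * g s"
      using frobenius_inner_mult_le[OF K mat_has_deriv_on_carrier(1)[OF D s]]
      unfolding g_def L_def by (simp add: sum_distrib_left[symmetric] mult.assoc)
  qed (auto simp: g_def D0 intro!: sum_nonneg)
  moreover have "(D t $$ (r,c))\<^sup>2 \<le> g t" if "r < n" "c < m" for r c
    unfolding g_def using that
    by (intro order.trans[OF member_le_sum member_le_sum[of r]]) (auto intro: sum_nonneg)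
  ultimately show ?thesis
    using mat_has_deriv_on_carrier(1)[OF D t] by (intro eq_matI) auto
qed

lemma linear_mat_ode_unique:
  fixes K :: "real mat"
  assumes K: "K \<in> carrier_mat n n"
    and X: "mat_has_deriv_on n m X (\<lambda>t. K * X t) {0..T}"
    and Y: "mat_has_deriv_on n m Y (\<lambda>t. K * Y t) {0..T}"
    and XY0: "X 0 = Y 0" and t: "t \<in> {0..T}"
  shows "X t = Y t"
proof -
  have "mat_has_deriv_on n m (\<lambda>t. X t - Y t) (\<lambda>t. K * (X t - Y t)) {0..T}"
    using mat_has_deriv_on_diff[OF X Y]
    by (rule mat_has_deriv_on_cong)
      (metis K mat_has_deriv_on_carrier(1)[OF X] mat_has_deriv_on_carrier(1)[OF Y] mult_minus_distrib_mat)
  then have "X t - Y t = 0\<^sub>m n m"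
    by (rule linear_mat_ode_zero[OF K _ _ t])
      (use t mat_has_deriv_on_carrier(1)[OF Y, of 0] in \<open>auto simp: XY0 minus_r_inv_mat\<close>)
  then have "(X t - Y t) $$ (i,j) = 0" if "i < n" "j < m" for i j
    using that by simp
  then show ?thesis
    using mat_has_deriv_on_carrier(1)[OF X t] mat_has_deriv_on_carrier(1)[OF Y t]
    by (intro eq_matI) auto
qed

section \<open>The matrix exponential\<close>

lemma smult_pow_mat:
  assumes "(K :: real mat) \<in> carrier_mat n n"
  shows "(t \<cdot>\<^sub>m K) ^\<^sub>m k = t ^ k \<cdot>\<^sub>m K ^\<^sub>m k"
proof (induction k)
  case (Suc k)
  have "(t \<cdot>\<^sub>m K) ^\<^sub>m Suc k = t ^ k \<cdot>\<^sub>m (K ^\<^sub>m k * (t \<cdot>\<^sub>m K))"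
    using Suc assms by (simp add: mult_smult_assoc_mat[of _ n n _ n])
  also have "\<dots> = t ^ Suc k \<cdot>\<^sub>m K ^\<^sub>m Suc k"
    using assms by (auto intro!: eq_matI simp: mult_smult_distrib[of _ n n _ n])
  finally show ?case .
qed (use assms in \<open>auto intro!: eq_matI\<close>)

lemma pow_mat_Suc_left:
  assumes "(K :: real mat) \<in> carrier_mat n n"
  shows "K ^\<^sub>m Suc k = K * K ^\<^sub>m k"
proof (induction k)
  case (Suc k)
  have "K ^\<^sub>m Suc (Suc k) = (K * K ^\<^sub>m k) * K" using Suc by simp
  also have "\<dots> = K * K ^\<^sub>m Suc k" using assms by (simp add: assoc_mult_mat[of _ n n _ n _ n])
  finally show ?case .
qed (use assms in simp)

lemma pow_mat_entry_bound:
  assumes K: "(K :: real mat) \<in> carrier_mat n n" and r: "r < n" and c: "c < n"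
  shows "\<bar>(K ^\<^sub>m k) $$ (r,c)\<bar> \<le> ((\<Sum>i<n. \<Sum>j<n. \<bar>K $$ (i,j)\<bar>) + 1) ^ k"
  using r c
proof (induction k arbitrary: r c)
  case (Suc k)
  define L where "L = (\<Sum>i<n. \<Sum>j<n. \<bar>K $$ (i,j)\<bar>) + 1"
  have L1: "1 \<le> L" unfolding L_def by (auto intro!: sum_nonneg)
  have col_le: "(\<Sum>j<n. \<bar>K $$ (j,c)\<bar>) \<le> L"
  proof -
    have "(\<Sum>j<n. \<bar>K $$ (j,c)\<bar>) \<le> (\<Sum>j<n. \<Sum>i<n. \<bar>K $$ (j,i)\<bar>)"
      by (intro sum_mono member_le_sum) (use Suc.prems in auto)
    then show ?thesis unfolding L_def by simp
  qed
  have "\<bar>(K ^\<^sub>m Suc k) $$ (r,c)\<bar> = \<bar>\<Sum>j<n. (K ^\<^sub>m k) $$ (r,j) * K $$ (j,c)\<bar>"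
    using K Suc.prems by (simp add: scalar_prod_def atLeast0LessThan)
  also have "\<dots> \<le> (\<Sum>j<n. \<bar>(K ^\<^sub>m k) $$ (r,j)\<bar> * \<bar>K $$ (j,c)\<bar>)"
    by (rule order.trans[OF sum_abs]) (simp add: abs_mult)
  also have "\<dots> \<le> (\<Sum>j<n. L ^ k * \<bar>K $$ (j,c)\<bar>)"
    using Suc.IH Suc.prems unfolding L_def by (intro sum_mono mult_right_mono) auto
  also have "\<dots> \<le> L ^ k * L"
    using col_le L1 by (simp add: sum_distrib_left[symmetric] mult_left_mono)
  finally show ?case unfolding L_def by (simp add: mult.commute)
qed (use K in auto)

definition mexp_coeff :: "real mat \<Rightarrow> nat \<Rightarrow> nat \<Rightarrow> nat \<Rightarrow> real" where
  "mexp_coeff K r c k = (K ^\<^sub>m k) $$ (r,c) / fact k"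

lemma mexp_smult_index:
  assumes "K \<in> carrier_mat n n" and "r < n" and "c < n"
  shows "mexp (t \<cdot>\<^sub>m K) $$ (r,c) = (\<Sum>k. mexp_coeff K r c k * t ^ k)"
  using assms unfolding mexp_def mexp_coeff_def by (simp add: smult_pow_mat mult.commute)

lemma mexp_carrier: "K \<in> carrier_mat n n \<Longrightarrow> mexp (t \<cdot>\<^sub>m K) \<in> carrier_mat n n"
  unfolding mexp_def by auto

lemma summable_mexp_coeff:
  assumes K: "K \<in> carrier_mat n n" and r: "r < n" and c: "c < n"
  shows "summable (\<lambda>k. mexp_coeff K r c k * y ^ k)"
proof (rule summable_comparison_test[OF exI[of _ 0] summable_exp])
  define L where "L = (\<Sum>i<n. \<Sum>j<n. \<bar>K $$ (i,j)\<bar>) + 1"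
  show "\<forall>k\<ge>0. norm (mexp_coeff K r c k * y ^ k) \<le> inverse (fact k) * (L * \<bar>y\<bar>) ^ k"
  proof (intro allI impI)
    fix k :: nat
    have "norm (mexp_coeff K r c k * y ^ k) = \<bar>(K ^\<^sub>m k) $$ (r,c)\<bar> * \<bar>y\<bar> ^ k / fact k"
      unfolding mexp_coeff_def by (simp add: abs_mult power_abs)
    also have "\<dots> \<le> L ^ k * \<bar>y\<bar> ^ k / fact k"
      using pow_mat_entry_bound[OF K r c, of k] unfolding L_def
      by (intro divide_right_mono mult_right_mono) auto
    finally show "norm (mexp_coeff K r c k * y ^ k) \<le> inverse (fact k) * (L * \<bar>y\<bar>) ^ k"
      by (simp add: power_mult_distrib field_simps)
  qed
qed

lemma mexp_smult_index_has_derivative: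
  assumes K: "K \<in> carrier_mat n n" and r: "r < n" and c: "c < n"
  shows "((\<lambda>s. mexp (s \<cdot>\<^sub>m K) $$ (r,c)) has_real_derivative (K * mexp (t \<cdot>\<^sub>m K)) $$ (r,c)) (at t)"
proof -
  have powser: "((\<lambda>s. \<Sum>k. mexp_coeff K r c k * s ^ k) has_real_derivative
      (\<Sum>k. diffs (mexp_coeff K r c) k * t ^ k)) (at t)"
    by (rule termdiffs_strong_converges_everywhere) (rule summable_mexp_coeff[OF K r c])
  have "diffs (mexp_coeff K r c) k * t ^ k = (\<Sum>j<n. K $$ (r,j) * (mexp_coeff K j c k * t ^ k))" for k
  proof -
    have "diffs (mexp_coeff K r c) k = (K * K ^\<^sub>m k) $$ (r,c) / fact k"
      unfolding diffs_def mexp_coeff_def pow_mat_Suc_left[OF K, symmetric]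
      by (simp add: field_simps del: of_nat_Suc)
    then show ?thesis
      using K r c unfolding mexp_coeff_def
      by (simp add: scalar_prod_def atLeast0LessThan sum_distrib_left sum_divide_distrib mult_ac)
  qed
  then have "(\<Sum>k. diffs (mexp_coeff K r c) k * t ^ k) = (\<Sum>k. \<Sum>j<n. K $$ (r,j) * (mexp_coeff K j c k * t ^ k))"
    by simp
  also have "\<dots> = (\<Sum>j<n. \<Sum>k. K $$ (r,j) * (mexp_coeff K j c k * t ^ k))"
    by (rule suminf_sum) (use summable_mexp_coeff[OF K _ c] in \<open>auto intro: summable_mult\<close>)
  also have "\<dots> = (\<Sum>j<n. K $$ (r,j) * mexp (t \<cdot>\<^sub>m K) $$ (j,c))"
    using summable_mexp_coeff[OF K _ c] mexp_smult_index[OF K _ c] by (auto simp: suminf_mult)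
  also have "\<dots> = (K * mexp (t \<cdot>\<^sub>m K)) $$ (r,c)"
    using K r c mexp_carrier[OF K, of t] by (auto simp: scalar_prod_def atLeast0LessThan)
  finally show ?thesis
    using powser mexp_smult_index[OF K r c] by simp
qed

lemma mat_has_deriv_on_mexp:
  "K \<in> carrier_mat n n \<Longrightarrow> mat_has_deriv_on n n (\<lambda>t. mexp (t \<cdot>\<^sub>m K)) (\<lambda>t. K * mexp (t \<cdot>\<^sub>m K)) S"
  by (intro mat_has_deriv_onI)
    (auto intro: has_field_derivative_at_within mexp_smult_index_has_derivative mexp_carrier
      mult_carrier_mat)

lemma mexp_zero:
  assumes K: "K \<in> carrier_mat n n"
  shows "mexp (0 \<cdot>\<^sub>m K) = 1\<^sub>m n"
proof (rule eq_matI)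
  fix r c assume "r < dim_row (1\<^sub>m n)" and "c < dim_col (1\<^sub>m n)"
  then show "mexp (0 \<cdot>\<^sub>m K) $$ (r,c) = 1\<^sub>m n $$ (r,c)"
    using mexp_smult_index[OF K, of r c 0] powser_zero[of "mexp_coeff K r c"] K
    by (simp add: mexp_coeff_def)
qed (use mexp_carrier[OF K, of 0] in auto)

lemma linear_mat_ode_eq_mexp:
  assumes K: "K \<in> carrier_mat n n"
    and X: "mat_has_deriv_on n n X (\<lambda>t. K * X t) {0..T}" and X0: "X 0 = 1\<^sub>m n"
    and t: "t \<in> {0..T}"
  shows "X t = mexp (t \<cdot>\<^sub>m K)"
  by (rule linear_mat_ode_unique[OF K X mat_has_deriv_on_mexp[OF K] _ t]) (simp add: X0 mexp_zero[OF K])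

lemma mexp_commute:
  assumes K: "K \<in> carrier_mat n n" and W: "W \<in> carrier_mat n n" and comm: "W * K = K * W"
    and t: "0 \<le> t"
  shows "W * mexp (t \<cdot>\<^sub>m K) = mexp (t \<cdot>\<^sub>m K) * W"
proof -
  let ?E = "\<lambda>t. mexp (t \<cdot>\<^sub>m K)"
  have E: "?E s \<in> carrier_mat n n" for s by (rule mexp_carrier[OF K])
  have left: "mat_has_deriv_on n n (\<lambda>s. W * ?E s) (\<lambda>s. K * (W * ?E s)) {0..t}"
    using mat_has_deriv_on_mult_left[OF W mat_has_deriv_on_mexp[OF K]]
  proof (rule mat_has_deriv_on_cong)
    fix s
    have "W * (K * ?E s) = (W * K) * ?E s"
      using W K E by (simp add: assoc_mult_mat[of _ n n _ n _ n])
    also have "\<dots> = K * (W * ?E s)"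
      using W K E by (simp add: comm assoc_mult_mat[of _ n n _ n _ n])
    finally show "W * (K * ?E s) = K * (W * ?E s)" .
  qed
  have right: "mat_has_deriv_on n n (\<lambda>s. ?E s * W) (\<lambda>s. K * (?E s * W)) {0..t}"
    using mat_has_deriv_on_mult_right[OF W mat_has_deriv_on_mexp[OF K]]
    by (rule mat_has_deriv_on_cong) (use W K E in \<open>simp add: assoc_mult_mat[of _ n n _ n _ n]\<close>)
  show ?thesis
    by (rule linear_mat_ode_unique[OF K left right]) (use W t in \<open>simp_all add: mexp_zero[OF K]\<close>)
qed

section \<open>Entrywise integrals\<close>

lemma mat_integral_carrier: "mat_integral n m a b F \<in> carrier_mat n m"
  unfolding mat_integral_def by auto

lemma mat_integral_cong:
  "(\<And>t. t \<in> {a..b} \<Longrightarrow> F t = G t) \<Longrightarrow> mat_integral n m a b F = mat_integral n m a b G"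
  unfolding mat_integral_def by (intro eq_matI) (auto intro!: integral_cong)

lemma mat_integral_mult_left:
  assumes C: "C \<in> carrier_mat k n"
    and F: "\<And>t. t \<in> {a..b} \<Longrightarrow> F t \<in> carrier_mat n m"
    and int: "\<And>r c. r < n \<Longrightarrow> c < m \<Longrightarrow> (\<lambda>t. F t $$ (r,c)) integrable_on {a..b}"
  shows "C * mat_integral n m a b F = mat_integral k m a b (\<lambda>t. C * F t)"
proof (rule eq_matI)
  fix i c assume "i < dim_row (mat_integral k m a b (\<lambda>t. C * F t))"
    and "c < dim_col (mat_integral k m a b (\<lambda>t. C * F t))"
  then have i: "i < k" and c: "c < m" unfolding mat_integral_def by auto
  have "(C * mat_integral n m a b F) $$ (i,c) = (\<Sum>j<n. C $$ (i,j) * integral {a..b} (\<lambda>t. F t $$ (j,c)))"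
    using C i c by (simp add: mat_integral_def scalar_prod_def atLeast0LessThan)
  also have "\<dots> = integral {a..b} (\<lambda>t. \<Sum>j<n. C $$ (i,j) * F t $$ (j,c))"
    by (subst integral_sum) (use int c in \<open>auto intro: integrable_on_mult_right\<close>)
  also have "\<dots> = integral {a..b} (\<lambda>t. (C * F t) $$ (i,c))"
    by (intro integral_cong) (use index_mult_mat_sum[OF C F i c] in auto)
  finally show "(C * mat_integral n m a b F) $$ (i,c) = mat_integral k m a b (\<lambda>t. C * F t) $$ (i,c)"
    using i c unfolding mat_integral_def by simp
qed (use C in \<open>auto simp: mat_integral_def\<close>)

lemma integrable_mexp_mult_index:
  assumes "K \<in> carrier_mat n n" and "D \<in> carrier_mat n m"
    and "r < n" and "c < m"
  shows "(\<lambda>t. (mexp (t \<cdot>\<^sub>m K) * D) $$ (r,c)) integrable_on {a..b}"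
  by (rule integrable_continuous_interval, rule mat_has_deriv_on_continuous[OF
        mat_has_deriv_on_mult_right[OF assms(2) mat_has_deriv_on_mexp[OF assms(1)]] assms(3,4)])

lemma mat_has_deriv_on_integral:
  assumes F: "mat_has_deriv_on n m F F' {0..T}" and T: "0 \<le> T"
  shows "F T = F 0 + mat_integral n m 0 T F'"
proof (rule eq_matI)
  fix r c assume "r < dim_row (F 0 + mat_integral n m 0 T F')"
    and "c < dim_col (F 0 + mat_integral n m 0 T F')"
  then have r: "r < n" and c: "c < m" by (auto simp: mat_integral_def)
  have "((\<lambda>t. F' t $$ (r,c)) has_integral (F T $$ (r,c) - F 0 $$ (r,c))) {0..T}"
    by (rule fundamental_theorem_of_calculus[OF T])
      (use mat_has_deriv_onD[OF F _ r c] in \<open>auto simp: has_real_derivative_iff_has_vector_derivative\<close>)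
  then show "F T $$ (r,c) = (F 0 + mat_integral n m 0 T F') $$ (r,c)"
    using r c T mat_has_deriv_on_dim[OF F, of 0] by (auto simp: mat_integral_def integral_unique)
qed (use T mat_has_deriv_on_dim[OF F, of 0] mat_has_deriv_on_dim[OF F, of T] in \<open>auto simp: mat_integral_def\<close>)

lemma mat_has_deriv_on_integral_zero:
  assumes "mat_has_deriv_on n m F F' {0..T}" and "F 0 = 0\<^sub>m n m" and "0 \<le> T"
    and "\<And>t. t \<in> {0..T} \<Longrightarrow> F' t = G t"
  shows "F T = mat_integral n m 0 T G"
  using mat_has_deriv_on_integral[OF mat_has_deriv_on_cong[OF assms(1,4)] assms(3)] assms(2)
  by (simp add: mat_integral_carrier)

lemma mat_integral_mexp_commute:
  assumes K: "K \<in> carrier_mat n n" and V: "V \<in> carrier_mat n n" and comm: "V * K = K * V"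
    and D: "D \<in> carrier_mat n p"
  shows "mat_integral n p 0 s (\<lambda>r. mexp (r \<cdot>\<^sub>m K) * (V * D))
    = V * mat_integral n p 0 s (\<lambda>r. mexp (r \<cdot>\<^sub>m K) * D)"
proof -
  have pointwise: "mexp (r \<cdot>\<^sub>m K) * (V * D) = V * (mexp (r \<cdot>\<^sub>m K) * D)" if "r \<in> {0..s}" for r
  proof -
    have E: "mexp (r \<cdot>\<^sub>m K) \<in> carrier_mat n n" by (rule mexp_carrier[OF K])
    have "mexp (r \<cdot>\<^sub>m K) * (V * D) = (mexp (r \<cdot>\<^sub>m K) * V) * D"
      by (rule assoc_mult_mat[OF E V D, symmetric])
    also have "\<dots> = (V * mexp (r \<cdot>\<^sub>m K)) * D"
      using mexp_commute[OF K V comm] that by simp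
    also have "\<dots> = V * (mexp (r \<cdot>\<^sub>m K) * D)"
      by (rule assoc_mult_mat[OF V E D])
    finally show ?thesis .
  qed
  have "mat_integral n p 0 s (\<lambda>r. mexp (r \<cdot>\<^sub>m K) * (V * D))
      = mat_integral n p 0 s (\<lambda>r. V * (mexp (r \<cdot>\<^sub>m K) * D))"
    by (rule mat_integral_cong) (rule pointwise)
  also have "\<dots> = V * mat_integral n p 0 s (\<lambda>r. mexp (r \<cdot>\<^sub>m K) * D)"
    by (rule mat_integral_mult_left[OF V, symmetric])
      (auto intro: mult_carrier_mat[OF mexp_carrier[OF K] D] integrable_mexp_mult_index[OF K D])
  finally show ?thesis .
qed

section \<open>Block-triangular linear equations\<close>

lemma linear_mat_ode_input_ident:
  assumes K: "K \<in> carrier_mat n n" and Bc: "Bc \<in> carrier_mat n p"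
    and A: "mat_has_deriv_on n n A (\<lambda>t. K * A t) {0..T}" and A0: "A 0 = 1\<^sub>m n"
    and B: "mat_has_deriv_on n p B (\<lambda>t. A t * Bc) {0..T}" and B0: "B 0 = 0\<^sub>m n p"
    and t: "t \<in> {0..T}"
  shows "A t * Bc = K * B t + Bc"
proof -
  (* A Bc - K B has derivative zero, i.e. solves X' = 0 X, so it keeps its initial value Bc. *)
  have "mat_has_deriv_on n p (\<lambda>t. A t * Bc - K * B t) (\<lambda>t. 0\<^sub>m n n * (A t * Bc - K * B t)) {0..T}"
  proof (rule mat_has_deriv_on_cong[OF mat_has_deriv_on_diff[OF
        mat_has_deriv_on_mult_right[OF Bc A] mat_has_deriv_on_mult_left[OF K B]]])
    fix s assume s: "s \<in> {0..T}"
    note dims = mat_has_deriv_on_carrier(1)[OF A s] mat_has_deriv_on_carrier(1)[OF B s]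
    then have "K * A s * Bc = K * (A s * Bc)" using K Bc by (simp add: assoc_mult_mat)
    then show "K * A s * Bc - K * (A s * Bc) = 0\<^sub>m n n * (A s * Bc - K * B s)"
      using K Bc dims by (intro eq_matI) auto
  qed
  moreover have "mat_has_deriv_on n p (\<lambda>t. Bc) (\<lambda>t. 0\<^sub>m n n * Bc) {0..T}"
    by (rule mat_has_deriv_on_cong[OF mat_has_deriv_on_const[OF Bc]]) (use Bc in auto)
  ultimately have eq: "A t * Bc - K * B t = Bc"
    by (rule linear_mat_ode_unique[OF zero_carrier_mat _ _ _ t]) (use Bc K in \<open>auto simp: A0 B0\<close>)
  note dims = K Bc mat_has_deriv_on_carrier(1)[OF A t] mat_has_deriv_on_carrier(1)[OF B t]
  have "(A t * Bc) $$ (i,j) = (K * B t + Bc) $$ (i,j)" if "i < n" "j < p" for i j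
  proof -
    have "(A t * Bc - K * B t) $$ (i,j) = Bc $$ (i,j)" unfolding eq ..
    then show ?thesis using that dims by simp
  qed
  then show ?thesis
    using dims by (intro eq_matI) auto
qed

lemma linear_mat_ode_input_integral:
  assumes K: "K \<in> carrier_mat n n" and Bc: "Bc \<in> carrier_mat n p"
    and A: "mat_has_deriv_on n n A (\<lambda>t. K * A t) {0..T}" and A0: "A 0 = 1\<^sub>m n"
    and B: "mat_has_deriv_on n p B (\<lambda>t. A t * Bc) {0..T}" and B0: "B 0 = 0\<^sub>m n p"
    and s: "s \<in> {0..T}"
  shows "B s = mat_integral n p 0 s (\<lambda>r. mexp (r \<cdot>\<^sub>m K) * Bc)"
proof -
  have sub: "{0..s} \<subseteq> {0..T}" using s by auto
  show ?thesis
    by (rule mat_has_deriv_on_integral_zero[OF mat_has_deriv_on_subset[OF B sub] B0])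
      (use s sub linear_mat_ode_eq_mexp[OF K A A0] in auto)
qed

lemma delayed_input_response:
  assumes K: "K \<in> carrier_mat n n" and V: "V \<in> carrier_mat n n" and comm: "V * K = K * V"
    and B1c: "B1c \<in> carrier_mat n p" and B2c: "B2c \<in> carrier_mat n p"
    and A: "mat_has_deriv_on n n A (\<lambda>t. K * A t) {0..T}" and A0: "A 0 = 1\<^sub>m n"
    and Av: "mat_has_deriv_on n n Av (\<lambda>t. (V * K) * Av t) {0..T}" and Av0: "Av 0 = 1\<^sub>m n"
    and B1: "mat_has_deriv_on n p B1 (\<lambda>t. A t * B1c) {0..T}" and B10: "B1 0 = 0\<^sub>m n p"
    and B2: "mat_has_deriv_on n p B2 (\<lambda>t. Av t * (V * (B2c - B1c))) {0..T}" and B20: "B2 0 = 0\<^sub>m n p"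
    and s: "s \<in> {0..T}"
  shows "B1 s + B2 s = mat_integral n p 0 s (\<lambda>r. mexp (r \<cdot>\<^sub>m K) * B1c)
    + V * mat_integral n p 0 s (\<lambda>r. mexp (r \<cdot>\<^sub>m (V * K)) * (B2c - B1c))"
proof -
  have VK: "V * K \<in> carrier_mat n n" by (rule mult_carrier_mat[OF V K])
  have "V * (V * K) = V * (K * V)" by (simp only: comm)
  also have "\<dots> = (V * K) * V" by (rule assoc_mult_mat[OF V K V, symmetric])
  finally have VK_comm: "V * (V * K) = (V * K) * V" .
  have D: "B2c - B1c \<in> carrier_mat n p" by (rule minus_carrier_mat[OF B1c])
  show ?thesis
    unfolding linear_mat_ode_input_integral[OF K B1c A A0 B1 B10 s]
      linear_mat_ode_input_integral[OF VK mult_carrier_mat[OF V D] Av Av0 B2 B20 s]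
      mat_integral_mexp_commute[OF VK V VK_comm D] ..
qed

lemma quadratic_cost_integral:
  assumes Q: "mat_has_deriv_on m m Q (\<lambda>t. transpose_mat (Y t) * W * Y t) {0..T}" and Q0: "Q 0 = 0\<^sub>m m m"
    and T: "0 \<le> T" and W: "W \<in> carrier_mat n n" and G: "\<And>t. G t \<in> carrier_mat n m"
    and Y: "\<And>t. t \<in> {0..T} \<Longrightarrow> Y t = exp (- (a / 2) * t) \<cdot>\<^sub>m G t"
  shows "Q T = mat_integral m m 0 T (\<lambda>t. exp (- a * t) \<cdot>\<^sub>m (transpose_mat (G t) * W * G t))"
proof (rule mat_has_deriv_on_integral_zero[OF Q Q0 T])
  fix t assume "t \<in> {0..T}"
  moreover have "exp (- (a / 2) * t) * exp (- (a / 2) * t) = exp (- a * t)"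
    by (simp add: exp_add[symmetric])
  ultimately show "transpose_mat (Y t) * W * Y t = exp (- a * t) \<cdot>\<^sub>m (transpose_mat (G t) * W * G t)"
    by (simp only: Y transpose_smult_mult_smult[OF G W])
qed

lemma linear_cost_integral:
  assumes M: "mat_has_deriv_on m k M (\<lambda>t. transpose_mat (Y t) * W) {0..T}" and M0: "M 0 = 0\<^sub>m m k"
    and T: "0 \<le> T" and W: "W \<in> carrier_mat n k" and G: "\<And>t. G t \<in> carrier_mat n m"
    and Y: "\<And>t. t \<in> {0..T} \<Longrightarrow> Y t = exp (- a * t) \<cdot>\<^sub>m G t"
  shows "M T = mat_integral m k 0 T (\<lambda>t. exp (- a * t) \<cdot>\<^sub>m (transpose_mat (G t) * W))"
  by (rule mat_has_deriv_on_integral_zero[OF M M0 T]) (simp only: Y transpose_smult_mult[OF G W])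

lemma augmented_transition_ode:
  assumes K: "K \<in> carrier_mat n n" and Bc: "Bc \<in> carrier_mat n p"
    and A: "mat_has_deriv_on n n A (\<lambda>t. K * A t) {0..T}" and A0: "A 0 = 1\<^sub>m n"
    and B: "mat_has_deriv_on n p B (\<lambda>t. A t * Bc) {0..T}" and B0: "B 0 = 0\<^sub>m n p"
  shows "mat_has_deriv_on (n + p) (n + p) (\<lambda>t. four_block_mat (A t) (B t) (0\<^sub>m p n) (1\<^sub>m p))
    (\<lambda>t. four_block_mat K Bc (0\<^sub>m p n) (0\<^sub>m p p) * four_block_mat (A t) (B t) (0\<^sub>m p n) (1\<^sub>m p)) {0..T}"
proof (rule mat_has_deriv_on_cong[OF mat_has_deriv_on_four_block[OF A B
      mat_has_deriv_on_const mat_has_deriv_on_const]])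
  fix t assume t: "t \<in> {0..T}"
  show "four_block_mat (K * A t) (A t * Bc) (0\<^sub>m p n) (0\<^sub>m p p)
      = four_block_mat K Bc (0\<^sub>m p n) (0\<^sub>m p p) * four_block_mat (A t) (B t) (0\<^sub>m p n) (1\<^sub>m p)"
    using mult_augmented_block[OF K Bc mat_has_deriv_on_carrier(1)[OF A t] mat_has_deriv_on_carrier(1)[OF B t]]
      linear_mat_ode_input_ident[OF K Bc A A0 B B0 t] by simp
qed auto

lemma mat_has_deriv_on_block_diag:
  assumes K: "K \<in> carrier_mat n1 n1" and F: "mat_has_deriv_on n1 n1 F (\<lambda>t. K * F t) S"
    and L: "L \<in> carrier_mat n2 n2" and G: "mat_has_deriv_on n2 n2 G (\<lambda>t. L * G t) S"
  shows "mat_has_deriv_on (n1 + n2) (n1 + n2) (\<lambda>t. four_block_mat (F t) (0\<^sub>m n1 n2) (0\<^sub>m n2 n1) (G t))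
    (\<lambda>t. four_block_mat K (0\<^sub>m n1 n2) (0\<^sub>m n2 n1) L * four_block_mat (F t) (0\<^sub>m n1 n2) (0\<^sub>m n2 n1) (G t)) S"
  by (rule mat_has_deriv_on_cong[OF mat_has_deriv_on_four_block[OF F
        mat_has_deriv_on_const mat_has_deriv_on_const G]])
    (auto simp: mult_block_diag[OF K _ L] mat_has_deriv_on_carrier[OF F] mat_has_deriv_on_carrier[OF G])

lemma mat_has_deriv_on_diag_block_mat_three:
  assumes K1: "K1 \<in> carrier_mat N N" and F1: "mat_has_deriv_on N N F1 (\<lambda>t. K1 * F1 t) S"
    and K2: "K2 \<in> carrier_mat N N" and F2: "mat_has_deriv_on N N F2 (\<lambda>t. K2 * F2 t) S"
    and K3: "K3 \<in> carrier_mat N N" and F3: "mat_has_deriv_on N N F3 (\<lambda>t. K3 * F3 t) S"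
  shows "mat_has_deriv_on (3 * N) (3 * N) (\<lambda>t. diag_block_mat [F1 t, F2 t, F3 t])
    (\<lambda>t. diag_block_mat [K1, K2, K3] * diag_block_mat [F1 t, F2 t, F3 t]) S"
proof -
  have N3: "3 * N = N + (N + N)" by simp
  have blocks: "mat_has_deriv_on (N + (N + N)) (N + (N + N))
     (\<lambda>t. four_block_mat (F1 t) (0\<^sub>m N (N + N)) (0\<^sub>m (N + N) N) (four_block_mat (F2 t) (0\<^sub>m N N) (0\<^sub>m N N) (F3 t)))
     (\<lambda>t. four_block_mat K1 (0\<^sub>m N (N + N)) (0\<^sub>m (N + N) N) (four_block_mat K2 (0\<^sub>m N N) (0\<^sub>m N N) K3) *
          four_block_mat (F1 t) (0\<^sub>m N (N + N)) (0\<^sub>m (N + N) N) (four_block_mat (F2 t) (0\<^sub>m N N) (0\<^sub>m N N) (F3 t))) S"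
    using K1 K2 K3 by (intro mat_has_deriv_on_block_diag F1 F2 F3) auto
  show ?thesis
    unfolding N3
  proof (rule mat_has_deriv_on_transform[OF blocks])
    fix t assume "t \<in> S"
    then show F: "diag_block_mat [F1 t, F2 t, F3 t] = four_block_mat (F1 t) (0\<^sub>m N (N + N))
        (0\<^sub>m (N + N) N) (four_block_mat (F2 t) (0\<^sub>m N N) (0\<^sub>m N N) (F3 t))"
      by (intro diag_block_mat_three mat_has_deriv_on_carrier[OF F1] mat_has_deriv_on_carrier[OF F2]
          mat_has_deriv_on_carrier[OF F3])
    show "diag_block_mat [K1, K2, K3] * diag_block_mat [F1 t, F2 t, F3 t] = four_block_mat K1 (0\<^sub>m N (N + N))
        (0\<^sub>m (N + N) N) (four_block_mat K2 (0\<^sub>m N N) (0\<^sub>m N N) K3) * four_block_mat (F1 t)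
        (0\<^sub>m N (N + N)) (0\<^sub>m (N + N) N) (four_block_mat (F2 t) (0\<^sub>m N N) (0\<^sub>m N N) (F3 t))"
      unfolding F diag_block_mat_three[OF K1 K2 K3] ..
  qed
qed

lemma mat_has_deriv_on_discount:
  assumes H: "H \<in> carrier_mat n n" and X: "mat_has_deriv_on n n X (\<lambda>t. H * X t) S"
  shows "mat_has_deriv_on n n (\<lambda>t. exp (- a * t) \<cdot>\<^sub>m X t)
    (\<lambda>t. (H - a \<cdot>\<^sub>m 1\<^sub>m n) * (exp (- a * t) \<cdot>\<^sub>m X t)) S"
proof (rule mat_has_deriv_on_cong[OF mat_has_deriv_on_scalar_mult[OF _ X]])
  show "((\<lambda>t. exp (- a * t)) has_real_derivative - a * exp (- a * t)) (at t within S)" for t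
    by (auto intro!: derivative_eq_intros)
  fix t assume "t \<in> S"
  then have Xt: "X t \<in> carrier_mat n n" by (rule mat_has_deriv_on_carrier[OF X])
  have "(H - a \<cdot>\<^sub>m 1\<^sub>m n) * (exp (- a * t) \<cdot>\<^sub>m X t)
      = exp (- a * t) \<cdot>\<^sub>m (H * X t) - a \<cdot>\<^sub>m (exp (- a * t) \<cdot>\<^sub>m X t)"
    using H Xt by (simp add: minus_mult_distrib_mat[of _ n n _ _ n] mult_smult_distrib
        mult_smult_assoc_mat[of _ n n _ n])
  then show "- a * exp (- a * t) \<cdot>\<^sub>m X t + exp (- a * t) \<cdot>\<^sub>m (H * X t)
      = (H - a \<cdot>\<^sub>m 1\<^sub>m n) * (exp (- a * t) \<cdot>\<^sub>m X t)"
    using H Xt by (auto intro!: eq_matI)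
qed

lemma discounted_block_transition_sandwich:
  fixes K W Bc Bb :: "real mat" and A Av B1 B2 X :: "real \<Rightarrow> real mat"
  assumes K: "K \<in> carrier_mat n n" and W: "W \<in> carrier_mat n n"
    and Bc: "Bc \<in> carrier_mat n p" and Bb: "Bb \<in> carrier_mat n p"
    and A: "mat_has_deriv_on n n A (\<lambda>t. K * A t) {0..T}" and A0: "A 0 = 1\<^sub>m n"
    and Av: "mat_has_deriv_on n n Av (\<lambda>t. W * Av t) {0..T}" and Av0: "Av 0 = 1\<^sub>m n"
    and B1: "mat_has_deriv_on n p B1 (\<lambda>t. A t * Bc) {0..T}" and B10: "B1 0 = 0\<^sub>m n p"
    and B2: "mat_has_deriv_on n p B2 (\<lambda>t. Av t * Bb) {0..T}" and B20: "B2 0 = 0\<^sub>m n p"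
    and X: "mat_has_deriv_on (3 * (n + p)) (3 * (n + p)) X
      (\<lambda>t. (diag_block_mat [four_block_mat K Bc (0\<^sub>m p n) (0\<^sub>m p p), four_block_mat W Bb (0\<^sub>m p n) (0\<^sub>m p p),
          four_block_mat W (0\<^sub>m n p) (0\<^sub>m p n) (0\<^sub>m p p)] - a \<cdot>\<^sub>m 1\<^sub>m (3 * (n + p))) * X t) {0..T}"
    and X0: "X 0 = 1\<^sub>m (3 * (n + p))"
    and t: "t \<in> {0..T}"
  shows "hstack (n + p) [1\<^sub>m (n + p), 1\<^sub>m (n + p), - 1\<^sub>m (n + p)] * X t
      * vstack (n + p) [1\<^sub>m (n + p), 1\<^sub>m (n + p), 1\<^sub>m (n + p)]
    = exp (- a * t) \<cdot>\<^sub>m four_block_mat (A t) (B1 t + B2 t) (0\<^sub>m p n) (1\<^sub>m p)"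
proof -
  let ?N = "n + p"
  let ?E1 = "hstack ?N [1\<^sub>m ?N, 1\<^sub>m ?N, - 1\<^sub>m ?N]" and ?E2 = "vstack ?N [1\<^sub>m ?N, 1\<^sub>m ?N, 1\<^sub>m ?N]"
  let ?aug = "\<lambda>M Z. four_block_mat M Z (0\<^sub>m p n) (1\<^sub>m p)"
  let ?H = "diag_block_mat [four_block_mat K Bc (0\<^sub>m p n) (0\<^sub>m p p), four_block_mat W Bb (0\<^sub>m p n) (0\<^sub>m p p),
      four_block_mat W (0\<^sub>m n p) (0\<^sub>m p n) (0\<^sub>m p p)]"
  define G where "G t = diag_block_mat [?aug (A t) (B1 t), ?aug (Av t) (B2 t), ?aug (Av t) (0\<^sub>m n p)]" for t
  have zero: "mat_has_deriv_on n p (\<lambda>t. 0\<^sub>m n p) (\<lambda>t. Av t * 0\<^sub>m n p) {0..T}"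
    by (rule mat_has_deriv_on_cong[OF mat_has_deriv_on_const])
      (use right_mult_zero_mat[OF mat_has_deriv_on_carrier(1)[OF Av]] in auto)
  have G: "mat_has_deriv_on (3 * ?N) (3 * ?N) G (\<lambda>t. ?H * G t) {0..T}"
    unfolding G_def
    by (rule mat_has_deriv_on_diag_block_mat_three[OF _ augmented_transition_ode[OF K Bc A A0 B1 B10]
          _ augmented_transition_ode[OF W Bb Av Av0 B2 B20]
          _ augmented_transition_ode[OF W zero_carrier_mat Av Av0 zero refl]])
      (use K W Bc Bb in auto)
  have H: "?H \<in> carrier_mat (3 * ?N) (3 * ?N)"
    using K W Bc Bb by (auto simp: Let_def)
  have "X 0 = exp (- a * 0) \<cdot>\<^sub>m G 0"
    unfolding X0 G_def A0 Av0 B10 B20 four_block_one_mat diag_block_mat_three_one by (auto intro!: eq_matI)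
  then have "X t = exp (- a * t) \<cdot>\<^sub>m G t"
    by (rule linear_mat_ode_unique[OF minus_carrier_mat[OF smult_carrier_mat[OF one_carrier_mat]]
          X mat_has_deriv_on_discount[OF H G] _ t])
  moreover have "?E1 * G t * ?E2 = ?aug (A t) (B1 t + B2 t)"
    unfolding G_def using mat_has_deriv_on_carrier(1)[OF A t] mat_has_deriv_on_carrier(1)[OF Av t]
      mat_has_deriv_on_carrier(1)[OF B1 t] mat_has_deriv_on_carrier(1)[OF B2 t]
    by (subst sandwich_diag_block_mat_three) (auto intro!: eq_matI)
  moreover have "?E1 \<in> carrier_mat ?N (3 * ?N)" and "?E2 \<in> carrier_mat (3 * ?N) ?N"
    by (auto simp: Let_def)
  ultimately show ?thesis
    by (simp add: mult_smult_mult_mat[OF _ mat_has_deriv_on_carrier(1)[OF G t]])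
qed

section \<open>The delayed system\<close>

lemma set_sub_idx: "set (sub_idx nz nu) = {(i,j). i < nz \<and> j < nu}"
  unfolding sub_idx_def by auto

lemma carrier_Ac_mat:
  assumes "\<And>i j. i < nz \<Longrightarrow> j < nu \<Longrightarrow> Acij i j \<in> carrier_mat (nij i j) (nij i j)"
  shows "Ac_mat nz nu Acij \<in> carrier_mat (\<Sum>(i,j)\<leftarrow>sub_idx nz nu. nij i j) (\<Sum>(i,j)\<leftarrow>sub_idx nz nu. nij i j)"
  unfolding Ac_mat_def by (rule diag_block_mat_carrier) (use assms in \<open>auto simp: set_sub_idx\<close>)

lemma carrier_V_mat:
  "V_mat nz nu nij Ts tau \<in> carrier_mat (\<Sum>(i,j)\<leftarrow>sub_idx nz nu. nij i j) (\<Sum>(i,j)\<leftarrow>sub_idx nz nu. nij i j)"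
  unfolding V_mat_def by (rule diag_block_mat_carrier) auto

lemma carrier_B1c_mat:
  assumes "\<And>i j. i < nz \<Longrightarrow> j < nu \<Longrightarrow> Bcij i j \<in> carrier_mat (nij i j) 1"
  shows "B1c_mat nz nu Ts tau Bcij
    \<in> carrier_mat (\<Sum>(i,j)\<leftarrow>sub_idx nz nu. nij i j) ((mbar nz nu Ts tau + 1) * nu)"
  unfolding B1c_mat_def Let_def
  by (rule vstack_carrier) (use assms in \<open>auto simp: set_sub_idx unit_row_def Esel_def intro!: mult_carrier_mat\<close>)

lemma carrier_B2c_mat:
  assumes "\<And>i j. i < nz \<Longrightarrow> j < nu \<Longrightarrow> Bcij i j \<in> carrier_mat (nij i j) 1"
  shows "B2c_mat nz nu Ts tau Bcij
    \<in> carrier_mat (\<Sum>(i,j)\<leftarrow>sub_idx nz nu. nij i j) ((mbar nz nu Ts tau + 1) * nu)"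
  unfolding B2c_mat_def Let_def
  by (rule vstack_carrier) (use assms in \<open>auto simp: set_sub_idx unit_row_def Esel_def intro!: mult_carrier_mat\<close>)

lemma carrier_Cc_mat:
  assumes "\<And>i j. i < nz \<Longrightarrow> j < nu \<Longrightarrow> Ccij i j \<in> carrier_mat 1 (nij i j)"
  shows "Cc_mat nz nu Ccij \<in> carrier_mat nz (\<Sum>(i,j)\<leftarrow>sub_idx nz nu. nij i j)"
proof -
  have "(\<Sum>(i,j)\<leftarrow>sub_idx nz nu. nij i j) = (\<Sum>j\<leftarrow>[0..<nu]. \<Sum>i\<leftarrow>[0..<nz]. nij i j)"
    by (induction nu) (auto simp: sub_idx_def o_def)
  moreover have "diag_block_mat (map (\<lambda>i. Ccij i j) [0..<nz])
      \<in> carrier_mat (\<Sum>i\<leftarrow>[0..<nz]. 1) (\<Sum>i\<leftarrow>[0..<nz]. nij i j)" if "j < nu" for j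
    by (rule diag_block_mat_carrier) (use assms that in auto)
  ultimately show ?thesis
    unfolding Cc_mat_def by (auto intro!: hstack_carrier simp: sum_list_triv)
qed

lemma carrier_Do_mat: "Do_mat nz nu Ts tau Dcij \<in> carrier_mat nz ((mbar nz nu Ts tau + 1) * nu)"
proof -
  have "foldr (+) xs (0\<^sub>m r c) \<in> carrier_mat r c" for xs :: "real mat list" and r c
    by (induction xs) auto
  then have "Do_mat nz nu Ts tau Dcij \<in> carrier_mat (\<Sum>i\<leftarrow>[0..<nz]. 1) ((mbar nz nu Ts tau + 1) * nu)"
    unfolding Do_mat_def Let_def by (intro vstack_carrier) auto
  then show ?thesis by (simp add: sum_list_triv)
qed

lemma V_mat_Ac_mat_commute:
  assumes "\<And>i j. i < nz \<Longrightarrow> j < nu \<Longrightarrow> Acij i j \<in> carrier_mat (nij i j) (nij i j)"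
  shows "V_mat nz nu nij Ts tau * Ac_mat nz nu Acij = Ac_mat nz nu Acij * V_mat nz nu nij Ts tau"
proof -
  let ?v = "\<lambda>(i,j). delay_v Ts (tau i j) \<cdot>\<^sub>m 1\<^sub>m (nij i j)" and ?a = "\<lambda>(i,j). Acij i j"
  have carriers: "?v x \<in> carrier_mat (case x of (i,j) \<Rightarrow> nij i j) (case x of (i,j) \<Rightarrow> nij i j) \<and>
      ?a x \<in> carrier_mat (case x of (i,j) \<Rightarrow> nij i j) (case x of (i,j) \<Rightarrow> nij i j)"
    if "x \<in> set (sub_idx nz nu)" for x
    using that assms by (auto simp: set_sub_idx)
  have "?v x * ?a x = ?a x * ?v x" if "x \<in> set (sub_idx nz nu)" for x
    using carriers[OF that]
    by (auto simp: mult_smult_assoc_mat[of _ _ _ _ "snd x"] mult_smult_distrib split: prod.splits)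
  then show ?thesis
    unfolding V_mat_def Ac_mat_def
    using mult_diag_block_mat[of "sub_idx nz nu" ?v _ ?a] mult_diag_block_mat[of "sub_idx nz nu" ?a _ ?v] carriers
    by (metis (no_types, lifting) map_cong)
qed

lemma delay_system_carriers:
  fixes Ts :: real and tau :: "nat \<Rightarrow> nat \<Rightarrow> real"
  assumes dims: "\<And>i j. i < nz \<Longrightarrow> j < nu \<Longrightarrow>
      Acij i j \<in> carrier_mat (nij i j) (nij i j) \<and> Bcij i j \<in> carrier_mat (nij i j) 1 \<and>
      Ccij i j \<in> carrier_mat 1 (nij i j)"
  defines "nx \<equiv> \<Sum>(i,j)\<leftarrow>sub_idx nz nu. nij i j" and "nut \<equiv> (mbar nz nu Ts tau + 1) * nu"
  shows "Ac_mat nz nu Acij \<in> carrier_mat nx nx" and "V_mat nz nu nij Ts tau \<in> carrier_mat nx nx"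
    and "B1c_mat nz nu Ts tau Bcij \<in> carrier_mat nx nut" and "B2c_mat nz nu Ts tau Bcij \<in> carrier_mat nx nut"
    and "hstack nz [Cc_mat nz nu Ccij, Do_mat nz nu Ts tau Dcij] \<in> carrier_mat nz (nx + nut)"
    and "V_mat nz nu nij Ts tau * Ac_mat nz nu Acij = Ac_mat nz nu Acij * V_mat nz nu nij Ts tau"
proof -
  have A: "\<And>i j. i < nz \<Longrightarrow> j < nu \<Longrightarrow> Acij i j \<in> carrier_mat (nij i j) (nij i j)"
    and B: "\<And>i j. i < nz \<Longrightarrow> j < nu \<Longrightarrow> Bcij i j \<in> carrier_mat (nij i j) 1"
    and C: "\<And>i j. i < nz \<Longrightarrow> j < nu \<Longrightarrow> Ccij i j \<in> carrier_mat 1 (nij i j)"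
    using dims by simp_all
  show "Ac_mat nz nu Acij \<in> carrier_mat nx nx"
    unfolding nx_def by (rule carrier_Ac_mat) (rule A)
  show "V_mat nz nu nij Ts tau \<in> carrier_mat nx nx"
    unfolding nx_def by (rule carrier_V_mat)
  show "B1c_mat nz nu Ts tau Bcij \<in> carrier_mat nx nut"
    unfolding nx_def nut_def by (rule carrier_B1c_mat) (rule B)
  show "B2c_mat nz nu Ts tau Bcij \<in> carrier_mat nx nut"
    unfolding nx_def nut_def by (rule carrier_B2c_mat) (rule B)
  show "hstack nz [Cc_mat nz nu Ccij, Do_mat nz nu Ts tau Dcij] \<in> carrier_mat nz (nx + nut)"
    unfolding nx_def nut_def by (intro hstack_two_carrier carrier_Cc_mat carrier_Do_mat) (rule C)
  show "V_mat nz nu nij Ts tau * Ac_mat nz nu Acij = Ac_mat nz nu Acij * V_mat nz nu nij Ts tau"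
    by (rule V_mat_Ac_mat_commute) (rule A)
qed

lemma carrier_cost_weights:
  assumes C: "C \<in> carrier_mat k n" and Q: "sym_psd k Q"
  shows "- (transpose_mat C * Q) \<in> carrier_mat n k"
    and "- (- (transpose_mat C * Q) * C) \<in> carrier_mat n n"
proof -
  have "transpose_mat C \<in> carrier_mat n k" and "Q \<in> carrier_mat k k"
    using C Q by (simp_all add: sym_psd_def)
  then show M: "- (transpose_mat C * Q) \<in> carrier_mat n k"
    by (intro uminus_carrier_mat mult_carrier_mat)
  show "- (- (transpose_mat C * Q) * C) \<in> carrier_mat n n"
    by (intro uminus_carrier_mat mult_carrier_mat[OF M C])
qed

theorem proposition2:
  fixes nz nu :: nat
    and nij :: "nat \<Rightarrow> nat \<Rightarrow> nat"
    and Acij Bcij Ccij :: "nat \<Rightarrow> nat \<Rightarrow> real mat"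
    and Dcij :: "nat \<Rightarrow> nat \<Rightarrow> real"
    and tau :: "nat \<Rightarrow> nat \<Rightarrow> real"
    and Ts mu :: real
    and Qc :: "real mat"
    and A Av B1 B2 Hq Hm Q M :: "real \<Rightarrow> real mat"
  assumes nz: "1 \<le> nz" and nu: "1 \<le> nu"
    and dims: "\<And>i j. i < nz \<Longrightarrow> j < nu \<Longrightarrow>
         Acij i j \<in> carrier_mat (nij i j) (nij i j) \<and> Bcij i j \<in> carrier_mat (nij i j) 1 \<and>
         Ccij i j \<in> carrier_mat 1 (nij i j)"
    and tau_nonneg: "\<And>i j. i < nz \<Longrightarrow> j < nu \<Longrightarrow> 0 \<le> tau i j"
    and Ts: "0 < Ts"
    and Qc: "sym_psd nz Qc"
    and mu: "0 < mu"
  defines "nx \<equiv> (\<Sum>(i,j)\<leftarrow>sub_idx nz nu. nij i j)"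
    and "nut \<equiv> (mbar nz nu Ts tau + 1) * nu"
    and "Ac \<equiv> Ac_mat nz nu Acij"
    and "V \<equiv> V_mat nz nu nij Ts tau"
    and "B1c \<equiv> B1c_mat nz nu Ts tau Bcij"
    and "B2c \<equiv> B2c_mat nz nu Ts tau Bcij"
    and "Cc \<equiv> Cc_mat nz nu Ccij"
    and "Do \<equiv> Do_mat nz nu Ts tau Dcij"
  defines "nxu \<equiv> nx + nut"
  defines "Ixu \<equiv> (1\<^sub>m nxu :: real mat)"
    and "Ih \<equiv> (1\<^sub>m (3 * nxu) :: real mat)"
    and "B2cbar \<equiv> V * (B2c - B1c)"
  defines "H1c \<equiv> four_block_mat Ac B1c (0\<^sub>m nut nx) (0\<^sub>m nut nut)"
    and "H2c \<equiv> four_block_mat (V * Ac) B2cbar (0\<^sub>m nut nx) (0\<^sub>m nut nut)"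
    and "H3c \<equiv> four_block_mat (V * Ac) (0\<^sub>m nx nut) (0\<^sub>m nut nx) (0\<^sub>m nut nut)"
  defines "Hc \<equiv> diag_block_mat [H1c, H2c, H3c]"
  defines "Hcq \<equiv> Hc - (mu / 2) \<cdot>\<^sub>m Ih"
    and "Hcm \<equiv> Hc - mu \<cdot>\<^sub>m Ih"
    and "E1 \<equiv> hstack nxu [Ixu, Ixu, - Ixu]"
    and "E2 \<equiv> vstack nxu [Ixu, Ixu, Ixu]"
    and "Mcbar \<equiv> - (transpose_mat (hstack nz [Cc, Do]) * Qc)"
  defines "Qcbar \<equiv> - (Mcbar * hstack nz [Cc, Do])"
  assumes A_ode: "mat_has_deriv_on nx nx A (\<lambda>t. Ac * A t) {0..Ts}" and A0: "A 0 = 1\<^sub>m nx"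
    and Av_ode: "mat_has_deriv_on nx nx Av (\<lambda>t. (V * Ac) * Av t) {0..Ts}" and Av0: "Av 0 = 1\<^sub>m nx"
    and B1_ode: "mat_has_deriv_on nx nut B1 (\<lambda>t. A t * B1c) {0..Ts}" and B10: "B1 0 = 0\<^sub>m nx nut"
    and B2_ode: "mat_has_deriv_on nx nut B2 (\<lambda>t. Av t * B2cbar) {0..Ts}" and B20: "B2 0 = 0\<^sub>m nx nut"
    and Hq_ode: "mat_has_deriv_on (3 * nxu) (3 * nxu) Hq (\<lambda>t. Hcq * Hq t) {0..Ts}" and Hq0: "Hq 0 = Ih"
    and Hm_ode: "mat_has_deriv_on (3 * nxu) (3 * nxu) Hm (\<lambda>t. Hcm * Hm t) {0..Ts}" and Hm0: "Hm 0 = Ih"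
    and Q_ode: "mat_has_deriv_on nxu nxu Q
                  (\<lambda>t. transpose_mat (E1 * Hq t * E2) * Qcbar * (E1 * Hq t * E2)) {0..Ts}"
    and Q0: "Q 0 = 0\<^sub>m nxu nxu"
    and M_ode: "mat_has_deriv_on nxu nz M (\<lambda>t. transpose_mat (E1 * Hm t * E2) * Mcbar) {0..Ts}"
    and M0: "M 0 = 0\<^sub>m nxu nz"
  defines "Bo \<equiv> (\<lambda>s. mat_integral nx nut 0 s (\<lambda>r. mexp (r \<cdot>\<^sub>m Ac) * B1c)
                  + V * mat_integral nx nut 0 s (\<lambda>r. mexp (r \<cdot>\<^sub>m (V * Ac)) * (B2c - B1c)))"
  defines "Gam \<equiv> (\<lambda>s. four_block_mat (mexp (s \<cdot>\<^sub>m Ac)) (Bo s) (0\<^sub>m nut nx) (1\<^sub>m nut))"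
  shows "A Ts = mexp (Ts \<cdot>\<^sub>m Ac) \<and>
         B1 Ts + B2 Ts = Bo Ts \<and>
         Q Ts = mat_integral nxu nxu 0 Ts
                  (\<lambda>s. exp (- mu * s) \<cdot>\<^sub>m (transpose_mat (Gam s) * Qcbar * Gam s)) \<and>
         M Ts = mat_integral nxu nz 0 Ts
                  (\<lambda>s. exp (- mu * s) \<cdot>\<^sub>m (transpose_mat (Gam s) * Mcbar))"
proof -
  have nxu: "nxu = nx + nut" by (simp add: nxu_def)
  have Ac: "Ac \<in> carrier_mat nx nx" and V: "V \<in> carrier_mat nx nx"
    and B1c: "B1c \<in> carrier_mat nx nut" and B2c: "B2c \<in> carrier_mat nx nut"
    and CD: "hstack nz [Cc, Do] \<in> carrier_mat nz nxu" and comm: "V * Ac = Ac * V"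
    using delay_system_carriers[OF dims]
    unfolding nxu Ac_def V_def B1c_def B2c_def Cc_def Do_def nx_def nut_def by simp_all
  have Mcbar: "Mcbar \<in> carrier_mat nxu nz" and Qcbar: "Qcbar \<in> carrier_mat nxu nxu"
    unfolding Qcbar_def Mcbar_def by (rule carrier_cost_weights[OF CD Qc])+
  have A_exp: "A t = mexp (t \<cdot>\<^sub>m Ac)" if "t \<in> {0..Ts}" for t
    by (rule linear_mat_ode_eq_mexp[OF Ac A_ode A0 that])
  have Bo: "B1 s + B2 s = Bo s" if "s \<in> {0..Ts}" for s
    unfolding Bo_def by (rule delayed_input_response[OF Ac V comm B1c B2c A_ode A0 Av_ode Av0 B1_ode B10
        B2_ode[unfolded B2cbar_def] B20 that])
  have B2cbar: "B2cbar \<in> carrier_mat nx nut"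
    unfolding B2cbar_def by (rule mult_carrier_mat[OF V minus_carrier_mat[OF B1c]])
  have Gam: "E1 * X s * E2 = exp (- a * s) \<cdot>\<^sub>m Gam s"
    if X: "mat_has_deriv_on (3 * nxu) (3 * nxu) X (\<lambda>t. (Hc - a \<cdot>\<^sub>m Ih) * X t) {0..Ts}"
      and X0: "X 0 = Ih" and s: "s \<in> {0..Ts}" for X a s
    using discounted_block_transition_sandwich[OF Ac mult_carrier_mat[OF V Ac] B1c B2cbar A_ode A0
        Av_ode Av0 B1_ode B10 B2_ode B20 X[unfolded Hc_def H1c_def H2c_def H3c_def Ih_def nxu]
        X0[unfolded Ih_def nxu] s]
    unfolding E1_def E2_def Ixu_def nxu Gam_def A_exp[OF s] Bo[OF s] .
  have Gam_carrier: "Gam s \<in> carrier_mat nxu nxu" for s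
    unfolding Gam_def nxu by (rule four_block_carrier_mat[OF mexp_carrier[OF Ac] one_carrier_mat])
  have "Ts \<in> {0..Ts}" using Ts by simp
  then show ?thesis
    using A_exp Bo
      quadratic_cost_integral[OF Q_ode Q0 _ Qcbar Gam_carrier Gam[OF Hq_ode[unfolded Hcq_def] Hq0]]
      linear_cost_integral[OF M_ode M0 _ Mcbar Gam_carrier Gam[OF Hm_ode[unfolded Hcm_def] Hm0]]
    by simp
qed

end
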